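(* Let $S_1,\dots,S_m\subseteq\mathbb{F}_q$ with $\#S_1=\cdots=\#S_m=s$, and let $X_1^{i_1}X_2^{i_2}\cdots X_m^{i_m}\in\Delta(s,\dots,s)$ with $i_1\le i_2$. Let $$L_1=\{N\in\Delta(s,\dots,s)\mid N\preceq_{\deg}X_1^{i_1}X_2^{i_2}X_3^{i_3}\cdots X_m^{i_m}\},\quad L_2=\{N\in\Delta(s,\dots,s)\mid N\prec_{\deg}X_1^{i_2}X_2^{i_1}X_3^{i_3}\cdots X_m^{i_m}\}.$$ Then $C(L_1)$, $C(L_2)$ have length $n=s^m$ and codimension $\ell=i_2-i_1+1$, and $$M_1(C(L_1),C(L_2))=(s-i_1)\cdots(s-i_m),\qquad M_1(C(L_2)^\perp,C(L_1)^\perp)\ge(i_1+1)\cdots(i_m+1).$$ Moreover, letting $T=\{X_1^{i_2-w}X_2^{i_1+w}X_3^{i_3}\cdots X_m^{i_m}\mid w=0,\dots,i_2-i_1\}$, for $v=2,\dots,\ell$: $$M_v(C(L_1),C(L_2))=\min\{D(K)\mid K\subseteq T,\ \#K=v\},\qquad M_v(C(L_2)^\perp,C(L_1)^\perp)\ge\min\{D^\perp(K)\mid K\subseteq T,\ \#K=v\}.$$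
   Context: $q$ is a prime power. $S=S_1\times\cdots\times S_m=\{\alpha_1,\dots,\alpha_n\}$, $n=s^m$. $\Delta(s,\dots,s)=\{X_1^{a_1}\cdots X_m^{a_m}\mid 0\le a_t<s\}$. For $L\subseteq\Delta(s,\dots,s)$, $C(L)\subseteq\mathbb{F}_q^n$ is the span of $(N(\alpha_1),\dots,N(\alpha_n))$, $N\in L$; $C^\perp$ is the Euclidean dual. $\prec_{\deg}$ is the degree lexicographic ordering: $X_1^{a_1}\cdots X_m^{a_m}\prec_{\deg}X_1^{b_1}\cdots X_m^{b_m}$ iff either $\sum a_t<\sum b_t$, or $\sum a_t=\sum b_t$ and the rightmost nonzero entry of $(b_1-a_1,\dots,b_m-a_m)$ is positive. For $K\subseteq\Delta(s,\dots,s)$: $D(K)=\#\{N\in\Delta(s,\dots,s)\mid N$ is divisible by some $M\in K\}$, $D^\perp(K)=\#\{N\in\Delta(s,\dots,s)\mid N$ divides some $M\in K\}$. For linear codes $C_2\subsetneq C_1\subseteq\mathbb{F}_q^n$ and $1\le v\le\dim C_1-\dim C_2$, $M_v(C_1,C_2)=\min\{\#\mathrm{Supp}\,U\mid U\subseteq C_1\text{ subspace},\ \dim U=v,\ U\cap C_2=\{\vec0\}\}$, with $\mathrm{Supp}\,U$ the set of coordinates where some word of $U$ is nonzero. *)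

theory Defs
  imports Complex_Main "HOL-Library.Function_Algebras" "HOL-Library.FuncSet"
begin

(* Words of length n are functions from the evaluation-point set P to F_q
   (extended by 0 outside P).  Scalar multiplication on words: *)
definition scaleF :: "'a::field \<Rightarrow> ('b \<Rightarrow> 'a) \<Rightarrow> ('b \<Rightarrow> 'a)" where
  "scaleF c f = (\<lambda>x. c * f x)"

lemma vector_space_scaleF: "vector_space (scaleF :: 'a::field \<Rightarrow> ('b \<Rightarrow> 'a) \<Rightarrow> _)"
  by unfold_locales (auto simp: scaleF_def fun_eq_iff algebra_simps)

abbreviation fdim :: "('b \<Rightarrow> 'a::field) set \<Rightarrow> nat" where
  "fdim \<equiv> vector_space.dim scaleF"

abbreviation fspan :: "('b \<Rightarrow> 'a::field) set \<Rightarrow> ('b \<Rightarrow> 'a) set" where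
  "fspan \<equiv> module.span scaleF"

abbreviation fsubspace :: "('b \<Rightarrow> 'a::field) set \<Rightarrow> bool" where
  "fsubspace \<equiv> module.subspace scaleF"

(* Exponent vectors (a_1,...,a_m) are functions nat => nat, with entries
   a t for t in {1..m} and 0 elsewhere.  Delta(s,...,s): *)
definition Delta :: "nat \<Rightarrow> nat \<Rightarrow> (nat \<Rightarrow> nat) set" where
  "Delta m s = {a. (\<forall>t\<in>{1..m}. a t < s) \<and> (\<forall>t. t \<notin> {1..m} \<longrightarrow> a t = 0)}"

definition deglex_less :: "nat \<Rightarrow> (nat \<Rightarrow> nat) \<Rightarrow> (nat \<Rightarrow> nat) \<Rightarrow> bool" where
  "deglex_less m a b \<longleftrightarrow>
     (\<Sum>t=1..m. a t) < (\<Sum>t=1..m. b t) \<or>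
     ((\<Sum>t=1..m. a t) = (\<Sum>t=1..m. b t) \<and>
      (\<exists>t\<in>{1..m}. a t < b t \<and> (\<forall>u\<in>{t<..m}. a u = b u)))"

definition deglex_le :: "nat \<Rightarrow> (nat \<Rightarrow> nat) \<Rightarrow> (nat \<Rightarrow> nat) \<Rightarrow> bool" where
  "deglex_le m a b \<longleftrightarrow> deglex_less m a b \<or> a = b"

definition points :: "nat \<Rightarrow> (nat \<Rightarrow> 'a set) \<Rightarrow> (nat \<Rightarrow> 'a) set" where
  "points m S = PiE {1..m} S"

definition evalmon :: "nat \<Rightarrow> (nat \<Rightarrow> 'a::field set) \<Rightarrow> (nat \<Rightarrow> nat) \<Rightarrow> ((nat \<Rightarrow> 'a) \<Rightarrow> 'a)" where
  "evalmon m S a = (\<lambda>p. if p \<in> points m S then (\<Prod>t\<in>{1..m}. p t ^ a t) else 0)"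

definition evcode :: "nat \<Rightarrow> (nat \<Rightarrow> 'a::field set) \<Rightarrow> (nat \<Rightarrow> nat) set \<Rightarrow> ((nat \<Rightarrow> 'a) \<Rightarrow> 'a) set" where
  "evcode m S L = fspan (evalmon m S ` L)"

definition dualcode :: "'b set \<Rightarrow> ('b \<Rightarrow> 'a::field) set \<Rightarrow> ('b \<Rightarrow> 'a) set" where
  "dualcode P C = {y. (\<forall>p. p \<notin> P \<longrightarrow> y p = 0) \<and> (\<forall>x\<in>C. (\<Sum>p\<in>P. x p * y p) = 0)}"

definition Supp :: "('b \<Rightarrow> 'a::zero) set \<Rightarrow> 'b set" where
  "Supp U = {p. \<exists>u\<in>U. u p \<noteq> 0}"

definition RGHW :: "nat \<Rightarrow> ('b \<Rightarrow> 'a::field) set \<Rightarrow> ('b \<Rightarrow> 'a) set \<Rightarrow> nat" where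
  "RGHW v C1 C2 = Min {card (Supp U) | U. fsubspace U \<and> U \<subseteq> C1 \<and> fdim U = v \<and> U \<inter> C2 = {0}}"

definition mdvd :: "(nat \<Rightarrow> nat) \<Rightarrow> (nat \<Rightarrow> nat) \<Rightarrow> bool" where
  "mdvd a b \<longleftrightarrow> (\<forall>t. a t \<le> b t)"

definition Dfoot :: "nat \<Rightarrow> nat \<Rightarrow> (nat \<Rightarrow> nat) set \<Rightarrow> nat" where
  "Dfoot m s K = card {N \<in> Delta m s. \<exists>M\<in>K. mdvd M N}"

definition Dperp :: "nat \<Rightarrow> nat \<Rightarrow> (nat \<Rightarrow> nat) set \<Rightarrow> nat" where
  "Dperp m s K = card {N \<in> Delta m s. \<exists>M\<in>K. mdvd N M}"

end

(*
  For initial segments La \<subseteq> Lb of \<Delta> under the degree lexicographic order, the evaluations of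
  the monomials in \<Delta> form a basis of all words on the grid P, so C(Lb) has basis
  ev ` Lb.  Let U \<subseteq> C(Lb) meet C(La) trivially and vanish on Z = P - Supp U.  Adding the
  monomials of Lb - La one at a time, the dimension of U \<inter> C(L) can only grow at a monomial
  X^a that is the leading monomial of a polynomial vanishing on Z.  These monomials are closed
  under multiples, and their number is #P - #Z, because the footprint of the vanishing ideal of
  the grid subset Z has exactly #Z elements.  Hence D(K) \<le> #Supp U for a set K \<subseteq> Lb - La of
  size dim U; conversely the evaluations of the products of the (X_t - x_{t,j}) over t and
  j < a_t, for a \<in> K, span a subspace of support at most D(K).  The dual bound is symmetric, with divisors in place of multiples and the dual basis
  of the monomial evaluations.  In the situation of the theorem, L1 - L2 is the chain T, and for
  v = 1 the minimum over T is attained at i by an elementary product inequality.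
*)

theory Submission
  imports Defs "HOL-Computational_Algebra.Polynomial"
begin

subsection \<open>The degree lexicographic order\<close>

definition expvecs :: "nat \<Rightarrow> (nat \<Rightarrow> nat) set" where
  "expvecs m = {a. \<forall>t. t \<notin> {1..m} \<longrightarrow> a t = 0}"

lemma Delta_subset_expvecs: "Delta m s \<subseteq> expvecs m"
  by (auto simp: Delta_def expvecs_def)

lemma last_difference:
  fixes a b :: "nat \<Rightarrow> nat"
  assumes "t \<in> {k..m}" "a t \<noteq> b t"
  obtains u where "u \<in> {k..m}" "a u \<noteq> b u" "\<forall>v\<in>{u<..m}. a v = b v"
proof -
  define D where "D = {u\<in>{k..m}. a u \<noteq> b u}"
  have D: "finite D" "D \<noteq> {}" using assms by (auto simp: D_def)
  define u where "u = Max D"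
  have u: "u \<in> D" using D by (simp add: u_def)
  have "a v = b v" if v: "v \<in> {u<..m}" for v
  proof (rule ccontr)
    assume "a v \<noteq> b v"
    then have "v \<in> D" using v u by (auto simp: D_def)
    then have "v \<le> u" using D by (simp add: u_def)
    then show False using v by simp
  qed
  then show ?thesis using that u by (auto simp: D_def)
qed

lemma expvecs_difference_in_range:
  assumes "a \<in> expvecs m" "b \<in> expvecs m" "a t \<noteq> b t" shows "t \<in> {1..m}"
proof (rule ccontr)
  assume "t \<notin> {1..m}"
  then show False using assms by (simp add: expvecs_def)
qed

lemma deglex_less_irrefl: "\<not> deglex_less m a a"
  by (auto simp: deglex_less_def)

lemma deglex_less_if_degree_less:
  "(\<Sum>t=1..m. a t) < (\<Sum>t=1..m. b t) \<Longrightarrow> deglex_less m a b"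
  by (simp add: deglex_less_def)

lemma degree_le_if_deglex_less:
  "deglex_less m a b \<Longrightarrow> (\<Sum>t=1..m. a t) \<le> (\<Sum>t=1..m. b t)"
  by (auto simp: deglex_less_def)

lemma deglex_less_trans:
  assumes "deglex_less m a b" "deglex_less m b c" shows "deglex_less m a c"
proof (cases "(\<Sum>t=1..m. a t) < (\<Sum>t=1..m. c t)")
  case True then show ?thesis by (rule deglex_less_if_degree_less)
next
  case False
  moreover have "(\<Sum>t=1..m. a t) \<le> (\<Sum>t=1..m. b t)" "(\<Sum>t=1..m. b t) \<le> (\<Sum>t=1..m. c t)"
    using assms degree_le_if_deglex_less by blast+
  ultimately have e: "(\<Sum>t=1..m. a t) = (\<Sum>t=1..m. b t)" "(\<Sum>t=1..m. b t) = (\<Sum>t=1..m. c t)"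
    by linarith+
  from assms(1) e obtain t1 where t1: "t1\<in>{1..m}" "a t1 < b t1" "\<forall>u\<in>{t1<..m}. a u = b u"
    by (auto simp: deglex_less_def)
  from assms(2) e obtain t2 where t2: "t2\<in>{1..m}" "b t2 < c t2" "\<forall>u\<in>{t2<..m}. b u = c u"
    by (auto simp: deglex_less_def)
  have "\<exists>t\<in>{1..m}. a t < c t \<and> (\<forall>u\<in>{t<..m}. a u = c u)"
  proof (cases "t1 \<le> t2")
    case True then show ?thesis using t1 t2 by (intro bexI[of _ t2]) (auto simp: le_less)
  next
    case False then show ?thesis using t1 t2 by (intro bexI[of _ t1]) auto
  qed
  then show ?thesis using e by (simp add: deglex_less_def)
qed

lemma deglex_le_less_trans: "deglex_le m a b \<Longrightarrow> deglex_less m b c \<Longrightarrow> deglex_less m a c"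
  by (auto simp: deglex_le_def intro: deglex_less_trans)

lemma deglex_less_total:
  assumes "a \<in> expvecs m" "b \<in> expvecs m" "a \<noteq> b"
  shows "deglex_less m a b \<or> deglex_less m b a"
proof (cases "(\<Sum>t=1..m. a t) = (\<Sum>t=1..m. b t)")
  case False then show ?thesis by (auto simp: deglex_less_def)
next
  case True
  obtain t where t: "a t \<noteq> b t" using assms(3) by auto
  then have "t \<in> {1..m}" by (rule expvecs_difference_in_range[OF assms(1,2)])
  then obtain u where "u \<in> {1..m}" "a u \<noteq> b u" "\<forall>v\<in>{u<..m}. a v = b v"
    using t by (rule last_difference)
  then consider "a u < b u" | "b u < a u" by linarith
  then show ?thesis using True \<open>u \<in> {1..m}\<close> \<open>\<forall>v\<in>{u<..m}. a v = b v\<close>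
    by cases (auto simp: deglex_less_def)
qed

lemma deglex_less_add_right:
  "deglex_less m a b \<Longrightarrow> deglex_less m (a + d) (b + d)"
  by (auto simp: deglex_less_def sum.distrib)

lemma deglex_less_if_mdvd:
  assumes "a \<in> expvecs m" "b \<in> expvecs m" "mdvd b a" "b \<noteq> a"
  shows "deglex_less m b a"
proof -
  obtain t where t: "b t \<noteq> a t" using assms(4) by auto
  then have "t \<in> {1..m}" by (rule expvecs_difference_in_range[OF assms(2,1)])
  then have "(\<Sum>u=1..m. b u) < (\<Sum>u=1..m. a u)"
    using assms(3) t by (intro sum_strict_mono_ex1) (auto simp: mdvd_def le_less)
  then show ?thesis by (rule deglex_less_if_degree_less)
qed

lemma deglex_less_rightmost_difference:
  assumes "deglex_less m a b" "(\<Sum>t=1..m. a t) = (\<Sum>t=1..m. b t)"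
    and "u \<in> {1..m}" "a u \<noteq> b u" "\<forall>v\<in>{u<..m}. a v = b v"
  shows "a u < b u"
proof -
  obtain t where t: "t \<in> {1..m}" "a t < b t" "\<forall>v\<in>{t<..m}. a v = b v"
    using assms(1,2) by (auto simp: deglex_less_def)
  have "t = u"
  proof (rule ccontr)
    assume "t \<noteq> u"
    then consider "t < u" | "u < t" by linarith
    then show False using t assms(3-5) by cases auto
  qed
  then show ?thesis using t by simp
qed

lemma deglex_greatest_exists:
  assumes "finite L" "L \<noteq> {}" "L \<subseteq> expvecs m"
  shows "\<exists>a\<in>L. \<forall>b\<in>L. b \<noteq> a \<longrightarrow> deglex_less m b a"
  using assms
proof (induction L rule: finite_ne_induct)
  case (insert x F)
  then obtain a where a: "a \<in> F" "\<forall>b\<in>F. b \<noteq> a \<longrightarrow> deglex_less m b a" by auto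
  have "x \<noteq> a" "x \<in> expvecs m" "a \<in> expvecs m" using insert a by auto
  then consider "deglex_less m x a" | "deglex_less m a x" using deglex_less_total by blast
  then show ?case
  proof cases
    case 1 then show ?thesis using a by auto
  next
    case 2 then show ?thesis using a by (auto intro: deglex_less_trans)
  qed
qed auto

lemma bij_betw_zero_extension:
  "bij_betw (\<lambda>h t. if t \<in> A then h t else (0::nat)) (PiE A B)
     {a. (\<forall>t\<in>A. a t \<in> B t) \<and> (\<forall>t. t \<notin> A \<longrightarrow> a t = 0)}"
proof (rule bij_betw_byWitness[where f' = "\<lambda>a. restrict a A"])
  show "\<forall>h\<in>PiE A B. restrict (\<lambda>t. if t \<in> A then h t else 0) A = h"
    by (auto simp: fun_eq_iff PiE_def extensional_def)
  show "\<forall>a\<in>{a. (\<forall>t\<in>A. a t \<in> B t) \<and> (\<forall>t. t \<notin> A \<longrightarrow> a t = 0)}.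
          (\<lambda>t. if t \<in> A then restrict a A t else 0) = a"
    by (auto simp: fun_eq_iff)
  show "(\<lambda>h t. if t \<in> A then h t else 0) ` PiE A B
          \<subseteq> {a. (\<forall>t\<in>A. a t \<in> B t) \<and> (\<forall>t. t \<notin> A \<longrightarrow> a t = 0)}"
    by (auto simp: PiE_def)
  show "(\<lambda>a. restrict a A) ` {a. (\<forall>t\<in>A. a t \<in> B t) \<and> (\<forall>t. t \<notin> A \<longrightarrow> a t = 0)} \<subseteq> PiE A B"
    by auto
qed

lemma card_zero_extensions:
  assumes "finite A"
  shows "card {a. (\<forall>t\<in>A. a t \<in> B t) \<and> (\<forall>t. t \<notin> A \<longrightarrow> a t = (0::nat))} = (\<Prod>t\<in>A. card (B t))"
  using bij_betw_same_card[OF bij_betw_zero_extension[of A B]] assms by (simp add: card_PiE)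

lemma Delta_eq: "Delta m s = {a. (\<forall>t\<in>{1..m}. a t \<in> {..<s}) \<and> (\<forall>t. t \<notin> {1..m} \<longrightarrow> a t = 0)}"
  by (auto simp: Delta_def)

lemma bij_betw_Delta:
  "bij_betw (\<lambda>h t. if t \<in> {1..m} then h t else (0::nat)) (PiE {1..m} (\<lambda>_. {..<s})) (Delta m s)"
  unfolding Delta_eq by (rule bij_betw_zero_extension)

lemma card_Delta: "card (Delta m s) = s ^ m"
  unfolding Delta_eq using card_zero_extensions[of "{1..m}" "\<lambda>_. {..<s}"] by simp

lemma finite_Delta: "finite (Delta m s)"
  using bij_betw_finite[OF bij_betw_Delta[of m s]] by (simp add: finite_PiE)

lemma Dfoot_singleton:
  assumes a: "a \<in> Delta m s" shows "Dfoot m s {a} = (\<Prod>t\<in>{1..m}. s - a t)"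
proof -
  have "{N \<in> Delta m s. \<exists>M\<in>{a}. mdvd M N}
      = {N. (\<forall>t\<in>{1..m}. N t \<in> {a t..<s}) \<and> (\<forall>t. t \<notin> {1..m} \<longrightarrow> N t = 0)}"
  proof (intro set_eqI iffI)
    fix N assume "N \<in> {N \<in> Delta m s. \<exists>M\<in>{a}. mdvd M N}"
    then show "N \<in> {N. (\<forall>t\<in>{1..m}. N t \<in> {a t..<s}) \<and> (\<forall>t. t \<notin> {1..m} \<longrightarrow> N t = 0)}"
      by (auto simp: Delta_def mdvd_def)
  next
    fix N assume N: "N \<in> {N. (\<forall>t\<in>{1..m}. N t \<in> {a t..<s}) \<and> (\<forall>t. t \<notin> {1..m} \<longrightarrow> N t = 0)}"
    have "a t \<le> N t" for t using N a by (cases "t \<in> {1..m}") (auto simp: Delta_def)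
    then show "N \<in> {N \<in> Delta m s. \<exists>M\<in>{a}. mdvd M N}" using N by (auto simp: Delta_def mdvd_def)
  qed
  then show ?thesis
    unfolding Dfoot_def using card_zero_extensions[of "{1..m}" "\<lambda>t. {a t..<s}"] by simp
qed

lemma Dperp_singleton:
  assumes a: "a \<in> Delta m s" shows "Dperp m s {a} = (\<Prod>t\<in>{1..m}. a t + 1)"
proof -
  have "{N \<in> Delta m s. \<exists>M\<in>{a}. mdvd N M}
      = {N. (\<forall>t\<in>{1..m}. N t \<in> {..a t}) \<and> (\<forall>t. t \<notin> {1..m} \<longrightarrow> N t = 0)}"
  proof (intro set_eqI iffI)
    fix N assume "N \<in> {N \<in> Delta m s. \<exists>M\<in>{a}. mdvd N M}"
    then show "N \<in> {N. (\<forall>t\<in>{1..m}. N t \<in> {..a t}) \<and> (\<forall>t. t \<notin> {1..m} \<longrightarrow> N t = 0)}"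
      by (auto simp: Delta_def mdvd_def)
  next
    fix N assume N: "N \<in> {N. (\<forall>t\<in>{1..m}. N t \<in> {..a t}) \<and> (\<forall>t. t \<notin> {1..m} \<longrightarrow> N t = 0)}"
    have "N t \<le> a t" for t using N a by (cases "t \<in> {1..m}") (auto simp: Delta_def)
    moreover have "N t < s" if "t \<in> {1..m}" for t
      using N a that le_less_trans[of "N t" "a t" s] by (auto simp: Delta_def)
    ultimately show "N \<in> {N \<in> Delta m s. \<exists>M\<in>{a}. mdvd N M}" using N by (auto simp: Delta_def mdvd_def)
  qed
  then show ?thesis
    unfolding Dperp_def using card_zero_extensions[of "{1..m}" "\<lambda>t. {..a t}"] by simp
qed

subsection \<open>Linear algebra of words\<close>

interpretation fv: vector_space "scaleF :: 'a::field \<Rightarrow> ('b \<Rightarrow> 'a) \<Rightarrow> ('b \<Rightarrow> 'a)"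
  by (rule vector_space_scaleF)

lemma scaleF_apply [simp]: "scaleF c f x = c * f x"
  by (simp add: scaleF_def)

lemma sum_fun_apply: "(\<Sum>i\<in>A. f i) x = (\<Sum>i\<in>A. f i x)"
  by (induct A rule: infinite_finite_induct) auto

lemma fdim_le_if_subset_span:
  fixes X Y F :: "('b \<Rightarrow> 'a::field) set"
  assumes "X \<subseteq> fspan Y" "Y \<subseteq> fspan F" "finite F"
  shows "fdim X \<le> fdim Y"
proof -
  obtain B where B: "B \<subseteq> Y" "fv.independent B" "Y \<subseteq> fspan B" "card B = fdim Y"
    by (rule fv.basis_exists)
  have "finite B" using fv.independent_span_bound[OF assms(3) B(2)] B(1) assms(2) by auto
  moreover have "X \<subseteq> fspan B"
    using assms(1) B(3) fv.span_minimal[OF _ fv.subspace_span] by blast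
  ultimately show ?thesis using B(4) fv.dim_le_card by metis
qed

lemma fdim_le_insert:
  fixes X Y F :: "('b \<Rightarrow> 'a::field) set"
  assumes "X \<subseteq> fspan (insert x Y)" "Y \<subseteq> fspan F" "finite F"
  shows "fdim X \<le> fdim Y + 1"
proof -
  obtain B where B: "B \<subseteq> Y" "fv.independent B" "Y \<subseteq> fspan B" "card B = fdim Y"
    by (rule fv.basis_exists)
  have fB: "finite B" using fv.independent_span_bound[OF assms(3) B(2)] B(1) assms(2) by auto
  have "insert x Y \<subseteq> fspan (insert x B)"
    using B(3) fv.span_mono[of B "insert x B"] fv.span_base[of x "insert x B"] by blast
  then have "X \<subseteq> fspan (insert x B)"
    using assms(1) fv.span_minimal[OF _ fv.subspace_span] by blast
  then have "fdim X \<le> card (insert x B)" using fB fv.dim_le_card by blast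
  also have "\<dots> \<le> card B + 1" using fB by (simp add: card_insert_if)
  finally show ?thesis using B(4) by simp
qed

lemma fdim_eq_0_if_subset_zero:
  fixes X :: "('b \<Rightarrow> 'a::field) set"
  assumes "X \<subseteq> {0}" shows "fdim X = 0"
proof -
  have "X \<subseteq> fspan {}" using assms by simp
  then show ?thesis using fv.dim_le_card[of X "{}"] by simp
qed

lemma fdim_inter_span_insert_le:
  fixes U F B :: "('b \<Rightarrow> 'a::field) set"
  assumes U: "fsubspace U" "U \<subseteq> fspan F" "finite F"
  shows "fdim (U \<inter> fspan (insert v B)) \<le> fdim (U \<inter> fspan B) + 1"
proof -
  define X where "X = U \<inter> fspan (insert v B)"
  define Y where "Y = U \<inter> fspan B"
  have YF: "Y \<subseteq> fspan F" using U(2) by (auto simp: Y_def)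
  have decomp: "\<exists>k. x - scaleF k v \<in> fspan B" if "x \<in> X" for x
    using that by (simp add: X_def fv.span_breakdown_eq)
  have "fdim X \<le> fdim Y + 1"
  proof (cases "X \<subseteq> fspan B")
    case True
    then have "X \<subseteq> Y" by (auto simp: X_def Y_def)
    then have "X \<subseteq> fspan Y" using fv.span_superset by blast
    from fdim_le_if_subset_span[OF this YF U(3)] show ?thesis by simp
  next
    case False
    then obtain x0 where x0: "x0 \<in> X" "x0 \<notin> fspan B" by blast
    obtain k0 where k0: "x0 - scaleF k0 v \<in> fspan B" using decomp[OF x0(1)] by blast
    have k0nz: "k0 \<noteq> 0" using k0 x0(2) by auto
    have "X \<subseteq> fspan (insert x0 Y)"
    proof
      fix x assume x: "x \<in> X"
      then obtain k where k: "x - scaleF k v \<in> fspan B" using decomp by blast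
      define y where "y = x - scaleF (k / k0) x0"
      have "y = (x - scaleF k v) - scaleF (k / k0) (x0 - scaleF k0 v)"
        using k0nz by (simp add: y_def fun_eq_iff algebra_simps)
      then have "y \<in> fspan B" using k k0 by (simp add: fv.span_diff fv.span_scale)
      moreover have "y \<in> U" using x x0 U(1)
        by (simp add: y_def X_def fv.subspace_diff fv.subspace_scale)
      ultimately have "y \<in> Y" by (simp add: Y_def)
      then show "x \<in> fspan (insert x0 Y)"
        unfolding fv.span_breakdown_eq y_def using fv.span_base by blast
    qed
    then show ?thesis by (rule fdim_le_insert[OF _ YF U(3)])
  qed
  then show ?thesis by (simp add: X_def Y_def)
qed

lemma fdim_le_kernel_plus_one:
  fixes W F :: "('b \<Rightarrow> 'a::field) set"
  assumes W: "fsubspace W" "W \<subseteq> fspan F" "finite F"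
    and lin: "\<And>x y c. x \<in> W \<Longrightarrow> y \<in> W \<Longrightarrow> \<phi> (x - scaleF c y) = \<phi> x - c * \<phi> y"
  shows "fdim W \<le> fdim {w\<in>W. \<phi> w = 0} + 1"
proof (cases "\<exists>w0\<in>W. \<phi> w0 \<noteq> 0")
  case False
  then have "{w\<in>W. \<phi> w = 0} = W" by blast
  then show ?thesis by simp
next
  case True
  then obtain w0 where w0: "w0 \<in> W" "\<phi> w0 \<noteq> 0" by blast
  have "W \<subseteq> fspan (insert w0 {w\<in>W. \<phi> w = 0})"
  proof
    fix u assume u: "u \<in> W"
    define k where "k = \<phi> u / \<phi> w0"
    have "u - scaleF k w0 \<in> W" using u w0(1) W(1) by (simp add: fv.subspace_diff fv.subspace_scale)
    moreover have "\<phi> (u - scaleF k w0) = 0" using lin[OF u w0(1), of k] w0(2) by (simp add: k_def)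
    ultimately have "u - scaleF k w0 \<in> fspan {w\<in>W. \<phi> w = 0}" by (simp add: fv.span_base)
    then show "u \<in> fspan (insert w0 {w\<in>W. \<phi> w = 0})"
      unfolding fv.span_breakdown_eq by blast
  qed
  moreover have "{w\<in>W. \<phi> w = 0} \<subseteq> fspan F" using W(2) by blast
  ultimately show ?thesis by (rule fdim_le_insert[OF _ _ W(3)])
qed

lemma combination_in_span_image:
  fixes f :: "'c \<Rightarrow> ('b \<Rightarrow> 'a::field)"
  assumes "finite K" "inj_on f K" "u \<in> fspan (f ` K)"
  obtains c where "u = (\<Sum>a\<in>K. scaleF (c a) (f a))"
proof -
  obtain g where "u = (\<Sum>v\<in>f ` K. scaleF (g v) v)"
    using assms(1,3) fv.span_finite[of "f ` K"] by auto
  then have "u = (\<Sum>a\<in>K. scaleF (g (f a)) (f a))" by (simp add: sum.reindex[OF assms(2)])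
  then show ?thesis by (rule that)
qed

lemma independent_image_if_combinations_trivial:
  fixes f :: "'c \<Rightarrow> ('b \<Rightarrow> 'a::field)"
  assumes fin: "finite K"
    and triv: "\<And>c. (\<Sum>a\<in>K. scaleF (c a) (f a)) = 0 \<Longrightarrow> \<forall>a\<in>K. c a = 0"
  shows "inj_on f K" and "fdim (fspan (f ` K)) = card K"
proof -
  show inj: "inj_on f K"
  proof
    fix a a' assume a: "a \<in> K" "a' \<in> K" "f a = f a'"
    show "a = a'"
    proof (rule ccontr)
      assume ne: "a \<noteq> a'"
      define c where "c b = (if b = a then 1 else if b = a' then -1 else (0::'a))" for b
      have "(\<Sum>b\<in>K. scaleF (c b) (f b)) = (\<Sum>b\<in>{a, a'}. scaleF (c b) (f b))"
        using a fin by (intro sum.mono_neutral_right) (auto simp: c_def fun_eq_iff)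
      also have "\<dots> = 0" using ne a(3) by (simp add: c_def fun_eq_iff)
      finally have "c a = 0" using triv a(1) by blast
      then show False by (simp add: c_def)
    qed
  qed
  have "fv.independent (f ` K)"
  proof (rule fv.independent_if_scalars_zero)
    fix g v assume "(\<Sum>v\<in>f ` K. scaleF (g v) v) = 0" "v \<in> f ` K"
    then show "g v = 0" using triv[of "\<lambda>a. g (f a)"] by (auto simp: sum.reindex[OF inj])
  qed (use fin in simp)
  then show "fdim (fspan (f ` K)) = card K"
    by (simp add: fv.dim_eq_card_independent card_image[OF inj])
qed

definition unit_word :: "'b \<Rightarrow> 'b \<Rightarrow> 'a::field" where
  "unit_word q = (\<lambda>p. if p = q then 1 else 0)"

definition supported_on :: "'b set \<Rightarrow> ('b \<Rightarrow> 'a::field) set" where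
  "supported_on J = {f. \<forall>p. p \<notin> J \<longrightarrow> f p = 0}"

lemma subspace_supported_on: "fsubspace (supported_on J)"
  by (auto simp: supported_on_def fv.subspace_def)

lemma Supp_subset_iff: "Supp U \<subseteq> J \<longleftrightarrow> U \<subseteq> supported_on J"
  by (auto simp: Supp_def supported_on_def)

lemma Supp_span: "Supp (fspan X) \<subseteq> Supp X"
proof -
  have "X \<subseteq> supported_on (Supp X)" by (simp add: Supp_subset_iff[symmetric])
  then have "fspan X \<subseteq> supported_on (Supp X)"
    by (rule fv.span_minimal[OF _ subspace_supported_on])
  then show ?thesis by (simp add: Supp_subset_iff)
qed

lemma sum_unit_word:
  assumes "finite J" "f \<in> supported_on J"
  shows "f = (\<Sum>q\<in>J. scaleF (f q) (unit_word q))"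
proof
  fix x
  have "(\<Sum>q\<in>J. scaleF (f q) (unit_word q)) x = (\<Sum>q\<in>J. if x = q then f q else 0)"
    by (simp add: sum_fun_apply unit_word_def if_distrib cong: if_cong)
  also have "\<dots> = f x" using assms by (simp add: supported_on_def)
  finally show "f x = (\<Sum>q\<in>J. scaleF (f q) (unit_word q)) x" by simp
qed

lemma inj_unit_word: "inj (unit_word :: 'b \<Rightarrow> 'b \<Rightarrow> 'a::field)"
proof (rule injI)
  fix x y :: 'b assume "(unit_word x :: 'b \<Rightarrow> 'a) = unit_word y"
  then have "(unit_word x x :: 'a) = unit_word y x" by simp
  then show "x = y" by (simp add: unit_word_def split: if_splits)
qed

lemma independent_unit_word:
  assumes "finite A" shows "fv.independent ((unit_word :: 'b \<Rightarrow> 'b \<Rightarrow> 'a::field) ` A)"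
proof (rule fv.independent_if_scalars_zero)
  let ?U = "(unit_word :: 'b \<Rightarrow> 'b \<Rightarrow> 'a) ` A"
  fix f w
  assume sum0: "(\<Sum>x\<in>?U. scaleF (f x) x) = 0" and w: "w \<in> ?U"
  from w obtain q where q: "q \<in> A" "w = unit_word q" by blast
  have "0 = (\<Sum>x\<in>?U. f x * x q)" using sum0 by (simp add: sum_fun_apply fun_eq_iff)
  also have "\<dots> = (\<Sum>x\<in>?U. if x = w then f x else 0)"
  proof (intro sum.cong refl)
    fix x assume "x \<in> ?U"
    then obtain q' where x: "x = unit_word q'" by auto
    have "x = w \<longleftrightarrow> q' = q" unfolding x q(2) by (rule inj_eq[OF inj_unit_word])
    moreover have "x q = (if q' = q then 1 else 0)" by (auto simp: x unit_word_def)
    ultimately show "f x * x q = (if x = w then f x else 0)" by simp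
  qed
  also have "\<dots> = f w" using w assms by simp
  finally show "f w = 0" by simp
qed (use assms in simp)

lemma supported_on_eq_span:
  assumes "finite J" shows "supported_on J = fspan (unit_word ` J)"
proof
  show "supported_on J \<subseteq> fspan (unit_word ` J)"
  proof
    fix f assume "f \<in> supported_on J"
    then have "f = (\<Sum>q\<in>J. scaleF (f q) (unit_word q))" by (rule sum_unit_word[OF assms])
    also have "\<dots> \<in> fspan (unit_word ` J)" by (intro fv.span_sum fv.span_scale fv.span_base) auto
    finally show "f \<in> fspan (unit_word ` J)" .
  qed
  show "fspan (unit_word ` J) \<subseteq> supported_on J"
    by (rule fv.span_minimal[OF _ subspace_supported_on]) (auto simp: supported_on_def unit_word_def)
qed

lemma fdim_supported_on:
  assumes "finite J" shows "fdim (supported_on J :: ('b \<Rightarrow> 'a::field) set) = card J"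
proof -
  have "fdim (supported_on J :: ('b \<Rightarrow> 'a) set) = card (unit_word ` J :: ('b \<Rightarrow> 'a) set)"
    unfolding supported_on_eq_span[OF assms] fv.dim_span
    by (rule fv.dim_eq_card_independent[OF independent_unit_word[OF assms]])
  also have "\<dots> = card J" by (rule card_image[OF inj_on_subset[OF inj_unit_word subset_UNIV]])
  finally show ?thesis .
qed

lemma linear_mult_right: "Vector_Spaces.linear scaleF scaleF (\<lambda>g p. g p * \<phi> p)"
  by (simp add: Vector_Spaces.linear_iff vector_space_scaleF fun_eq_iff algebra_simps)

lemma mult_right_in_span:
  fixes X :: "('b \<Rightarrow> 'a::field) set"
  assumes "f \<in> fspan X"
  shows "(\<lambda>p. f p * \<phi> p) \<in> fspan ((\<lambda>g p. g p * \<phi> p) ` X)"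
proof -
  interpret mult: Vector_Spaces.linear scaleF scaleF "\<lambda>(g :: 'b \<Rightarrow> 'a) p. g p * \<phi> p"
    by (rule linear_mult_right)
  show ?thesis using assms by (simp add: mult.span_image)
qed

lemma poly_eq_sum_below:
  fixes g :: "'a::comm_semiring_1 poly" assumes "degree g < s"
  shows "poly g y = (\<Sum>k<s. coeff g k * y ^ k)"
proof -
  have "poly g y = (\<Sum>k\<le>degree g. coeff g k * y ^ k)" by (rule poly_altdef)
  also have "\<dots> = (\<Sum>k<s. coeff g k * y ^ k)"
    using assms by (intro sum.mono_neutral_left) (auto simp: coeff_eq_0)
  finally show ?thesis .
qed

lemma exists_lagrange_poly:
  fixes A :: "'a::field set"
  assumes "finite A" "y \<in> A"
  obtains g where "degree g < card A" "poly g y = 1" "\<forall>z\<in>A - {y}. poly g z = 0"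
proof
  define g where "g = smult (inverse (\<Prod>x\<in>A - {y}. (y - x))) (\<Prod>x\<in>A - {y}. [:-x, 1:])"
  have "card A > 0" using assms card_gt_0_iff by blast
  have "degree g \<le> degree (\<Prod>x\<in>A - {y}. [:-x, 1:])" by (simp add: g_def)
  also have "\<dots> \<le> sum (degree \<circ> (\<lambda>x. [:-x, 1:])) (A - {y})"
    by (rule degree_prod_sum_le) (simp add: assms(1))
  also have "\<dots> = card A - 1" using assms by (simp add: card_Diff_singleton)
  also have "\<dots> < card A" using \<open>card A > 0\<close> by simp
  finally show "degree g < card A" .
  have "(\<Prod>x\<in>A - {y}. (y - x)) \<noteq> 0" using assms(1) by (simp add: prod_zero_iff)
  then show "poly g y = 1" by (simp add: g_def poly_prod)
  show "\<forall>z\<in>A - {y}. poly g z = 0"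
    using assms(1) by (auto simp: g_def poly_prod prod_zero_iff)
qed

subsection \<open>Evaluation codes on a grid\<close>

locale grid =
  fixes m s :: nat and S :: "nat \<Rightarrow> 'a::{field,finite} set"
  assumes card_S: "\<forall>t\<in>{1..m}. card (S t) = s" and s_pos: "0 < s"
begin

abbreviation "ev \<equiv> evalmon m S"
abbreviation "P \<equiv> points m S"
abbreviation "\<Delta> \<equiv> Delta m s"
abbreviation "words \<equiv> (supported_on P :: ((nat \<Rightarrow> 'a) \<Rightarrow> 'a) set)"

lemma finite_points: "finite P"
  unfolding points_def by (simp add: finite_PiE)

lemma card_points: "card P = s ^ m"
  using card_S by (simp add: points_def card_PiE)

lemma ev_outside: "p \<notin> P \<Longrightarrow> ev a p = 0"
  by (simp add: evalmon_def)

lemma ev_inside: "p \<in> P \<Longrightarrow> ev a p = (\<Prod>t\<in>{1..m}. p t ^ a t)"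
  by (simp add: evalmon_def)

lemma ev_add: "ev (b + d) = (\<lambda>p. ev b p * ev d p)"
proof
  fix p show "ev (b + d) p = ev b p * ev d p"
    by (cases "p \<in> P") (simp_all add: ev_inside ev_outside power_add prod.distrib)
qed

lemma fdim_words: "fdim words = s ^ m"
  using fdim_supported_on[OF finite_points] card_points by simp

lemma words_subset_span_unit_words: "words \<subseteq> fspan (unit_word ` P)"
  by (simp add: supported_on_eq_span[OF finite_points])

lemma ev_supported: "ev a \<in> words"
  by (simp add: supported_on_def ev_outside)

lemma span_ev_supported: "fspan (ev ` A) \<subseteq> words"
  using fv.span_minimal[OF _ subspace_supported_on] ev_supported by blast

lemma product_of_polys_as_ev_sum:
  assumes deg: "\<forall>t\<in>{1..m}. degree (g t) < s"
  shows "(\<lambda>p. if p \<in> P then \<Prod>t\<in>{1..m}. poly (g t) (p t) else 0)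
       = (\<Sum>b\<in>\<Delta>. scaleF (\<Prod>t\<in>{1..m}. coeff (g t) (b t)) (ev b))"
proof
  fix p
  show "(if p \<in> P then \<Prod>t\<in>{1..m}. poly (g t) (p t) else 0)
       = (\<Sum>b\<in>\<Delta>. scaleF (\<Prod>t\<in>{1..m}. coeff (g t) (b t)) (ev b)) p"
  proof (cases "p \<in> P")
    case False then show ?thesis by (simp add: sum_fun_apply ev_outside)
  next
    case True
    let ?F = "\<lambda>b. \<Prod>t\<in>{1..m}. coeff (g t) (b t) * p t ^ b t"
    have "(\<Prod>t\<in>{1..m}. poly (g t) (p t)) = (\<Prod>t\<in>{1..m}. \<Sum>k\<in>{..<s}. coeff (g t) k * p t ^ k)"
      using deg by (intro prod.cong refl poly_eq_sum_below) auto
    also have "\<dots> = (\<Sum>h\<in>PiE {1..m} (\<lambda>_. {..<s}). \<Prod>t\<in>{1..m}. coeff (g t) (h t) * p t ^ h t)"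
      by (rule prod_sum_PiE) auto
    also have "\<dots> = (\<Sum>h\<in>PiE {1..m} (\<lambda>_. {..<s}). ?F (\<lambda>t. if t \<in> {1..m} then h t else 0))"
      by (intro sum.cong refl prod.cong) auto
    also have "\<dots> = (\<Sum>b\<in>\<Delta>. ?F b)"
      by (rule sum.reindex_bij_betw[OF bij_betw_Delta])
    also have "\<dots> = (\<Sum>b\<in>\<Delta>. (\<Prod>t\<in>{1..m}. coeff (g t) (b t)) * ev b p)"
      using True by (simp add: ev_inside prod.distrib)
    finally show ?thesis using True by (simp add: sum_fun_apply)
  qed
qed

lemma unit_word_eq_product:
  assumes q: "q \<in> P" and at: "\<And>t. t \<in> {1..m} \<Longrightarrow> poly (g t) (q t) = 1"
    and off: "\<And>t z. t \<in> {1..m} \<Longrightarrow> z \<in> S t \<Longrightarrow> z \<noteq> q t \<Longrightarrow> poly (g t) z = 0"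
  shows "unit_word q = (\<lambda>p. if p \<in> P then \<Prod>t\<in>{1..m}. poly (g t) (p t) else 0)"
proof
  fix p
  show "unit_word q p = (if p \<in> P then \<Prod>t\<in>{1..m}. poly (g t) (p t) else 0)"
  proof (cases "p \<in> P \<and> p \<noteq> q")
    case True
    have "\<exists>t\<in>{1..m}. p t \<noteq> q t"
    proof (rule ccontr)
      assume "\<not> ?thesis"
      then have "p = q" using True q unfolding points_def by (intro PiE_ext[of p "{1..m}" S q]) auto
      then show False using True by simp
    qed
    then obtain t where t: "t \<in> {1..m}" "p t \<noteq> q t" by blast
    moreover have "p t \<in> S t" using True t(1) by (auto simp: points_def)
    ultimately have "poly (g t) (p t) = 0" using off by blast
    then have "(\<Prod>t\<in>{1..m}. poly (g t) (p t)) = 0" using t(1) by (intro prod_zero) auto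
    then show ?thesis using True by (simp add: unit_word_def)
  next
    case False
    show ?thesis
    proof (cases "p = q")
      case True
      have "(\<Prod>t\<in>{1..m}. poly (g t) (q t)) = 1" using at by (intro prod.neutral) blast
      then show ?thesis using True q by (simp add: unit_word_def)
    next
      case False
      then show ?thesis using \<open>\<not> (p \<in> P \<and> p \<noteq> q)\<close> by (simp add: unit_word_def)
    qed
  qed
qed

lemma unit_word_in_span_ev:
  assumes q: "q \<in> P" shows "unit_word q \<in> fspan (ev ` \<Delta>)"
proof -
  have "\<forall>t\<in>{1..m}. \<exists>g. degree g < s \<and> poly g (q t) = 1 \<and> (\<forall>z\<in>S t - {q t}. poly g z = 0)"
  proof
    fix t assume t: "t \<in> {1..m}"
    then have "q t \<in> S t" using q by (auto simp: points_def)
    then obtain g where "degree g < card (S t)" "poly g (q t) = 1" "\<forall>z\<in>S t - {q t}. poly g z = 0"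
      by (rule exists_lagrange_poly[OF finite]) blast
    then show "\<exists>g. degree g < s \<and> poly g (q t) = 1 \<and> (\<forall>z\<in>S t - {q t}. poly g z = 0)"
      using card_S t by auto
  qed
  from bchoice[OF this] obtain g where g: "\<forall>t\<in>{1..m}. degree (g t) < s \<and> poly (g t) (q t) = 1
      \<and> (\<forall>z\<in>S t - {q t}. poly (g t) z = 0)" by blast
  then have "unit_word q = (\<lambda>p. if p \<in> P then \<Prod>t\<in>{1..m}. poly (g t) (p t) else 0)"
    by (intro unit_word_eq_product[OF q]) simp_all
  also have "\<dots> = (\<Sum>b\<in>\<Delta>. scaleF (\<Prod>t\<in>{1..m}. coeff (g t) (b t)) (ev b))"
    by (rule product_of_polys_as_ev_sum) (use g in blast)
  also have "\<dots> \<in> fspan (ev ` \<Delta>)"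
    by (intro fv.span_sum fv.span_scale fv.span_base) auto
  finally show ?thesis .
qed

lemma span_ev_Delta: "fspan (ev ` \<Delta>) = words"
proof
  show "fspan (ev ` \<Delta>) \<subseteq> words" by (rule span_ev_supported)
  show "words \<subseteq> fspan (ev ` \<Delta>)"
    unfolding supported_on_eq_span[OF finite_points]
    by (rule fv.span_minimal[OF _ fv.subspace_span]) (auto intro: unit_word_in_span_ev)
qed

text \<open>Since \<open>ev\<close> maps the \<open>s ^ m\<close> elements of \<open>\<Delta>\<close> onto a spanning set of a space
  of dimension \<open>card P = s ^ m\<close>, it is injective with independent image.\<close>

lemma independent_ev_and_inj: "fv.independent (ev ` \<Delta>) \<and> inj_on ev \<Delta>"
proof -
  obtain B where B: "B \<subseteq> ev ` \<Delta>" "fv.independent B" "ev ` \<Delta> \<subseteq> fspan B"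
    using fv.maximal_independent_subset[of "ev ` \<Delta>"] by blast
  have "fspan B = fspan (ev ` \<Delta>)"
    using B fv.span_mono[OF B(1)] fv.span_minimal[OF B(3) fv.subspace_span] by blast
  then have "fspan B = fspan words"
    using span_ev_Delta fv.span_eq_iff subspace_supported_on by metis
  then have "fdim words = card B" by (rule fv.dim_eq_card[OF _ B(2)])
  then have cB: "card B = s ^ m" using fdim_words by simp
  have fE: "finite (ev ` \<Delta>)" using finite_Delta by simp
  have c1: "card (ev ` \<Delta>) \<le> s ^ m" using card_image_le[OF finite_Delta, of ev] card_Delta by simp
  have c2: "card B \<le> card (ev ` \<Delta>)" using card_mono[OF fE B(1)] .
  have "B = ev ` \<Delta>" using card_subset_eq[OF fE B(1)] c1 c2 cB by simp
  moreover have "inj_on ev \<Delta>"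
    by (rule eq_card_imp_inj_on[OF finite_Delta]) (use c1 c2 cB card_Delta[of m s] in linarith)
  ultimately show ?thesis using B(2) by simp
qed

lemma independent_ev: "fv.independent (ev ` \<Delta>)"
  using independent_ev_and_inj by simp

lemma inj_on_ev: "inj_on ev \<Delta>"
  using independent_ev_and_inj by simp

lemma fdim_evcode: "L \<subseteq> \<Delta> \<Longrightarrow> fdim (evcode m S L) = card L"
proof -
  assume L: "L \<subseteq> \<Delta>"
  have "fv.independent (ev ` L)" using fv.independent_mono[OF independent_ev] L by blast
  then have "fdim (evcode m S L) = card (ev ` L)"
    unfolding evcode_def fv.dim_span by (rule fv.dim_eq_card_independent)
  also have "\<dots> = card L" using card_image inj_on_subset[OF inj_on_ev L] by blast
  finally show ?thesis .
qed

lemma ev_coeffs_unique: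
  assumes eq: "(\<Sum>b\<in>\<Delta>. scaleF (x b) (ev b)) = (\<Sum>b\<in>\<Delta>. scaleF (y b) (ev b))" and b: "b \<in> \<Delta>"
  shows "x b = y b"
proof -
  define u where "u v = x (the_inv_into \<Delta> ev v) - y (the_inv_into \<Delta> ev v)" for v
  have "(\<Sum>v\<in>ev ` \<Delta>. scaleF (u v) v) = (\<Sum>b\<in>\<Delta>. scaleF (u (ev b)) (ev b))"
    by (rule sum.reindex[OF inj_on_ev, unfolded comp_def])
  also have "\<dots> = (\<Sum>b\<in>\<Delta>. scaleF (x b) (ev b) - scaleF (y b) (ev b))"
    by (intro sum.cong refl) (simp add: u_def the_inv_into_f_f[OF inj_on_ev] fun_eq_iff algebra_simps)
  also have "\<dots> = 0" using eq by (simp add: sum_subtractf)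
  finally have "(\<Sum>v\<in>ev ` \<Delta>. scaleF (u v) v) = 0" .
  moreover have "\<forall>T\<subseteq>ev ` \<Delta>. finite T \<longrightarrow> (\<forall>u. (\<Sum>v\<in>T. scaleF (u v) v) = 0 \<longrightarrow> (\<forall>v\<in>T. u v = 0))"
    using independent_ev by (simp only: fv.independent_explicit_finite_subsets)
  ultimately have "\<forall>v\<in>ev ` \<Delta>. u v = 0" using finite_Delta by blast
  then have "u (ev b) = 0" using b by blast
  then show ?thesis by (simp add: u_def the_inv_into_f_f[OF inj_on_ev b])
qed

lemma span_ev_coeffs:
  assumes A: "A \<subseteq> \<Delta>" and f: "f \<in> fspan (ev ` A)"
  obtains x where "f = (\<Sum>b\<in>\<Delta>. scaleF (x b) (ev b))" "\<forall>b. b \<notin> A \<longrightarrow> x b = 0"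
proof -
  have fA: "finite A" using A finite_Delta finite_subset by blast
  obtain u where u: "f = (\<Sum>v\<in>ev ` A. scaleF (u v) v)"
    using f fv.span_finite[of "ev ` A"] fA by auto
  have injA: "inj_on ev A" using inj_on_ev A inj_on_subset by blast
  have "f = (\<Sum>b\<in>A. scaleF (u (ev b)) (ev b))"
    using u by (simp add: sum.reindex[OF injA])
  also have "\<dots> = (\<Sum>b\<in>\<Delta>. scaleF (if b \<in> A then u (ev b) else 0) (ev b))"
    using A finite_Delta by (intro sum.mono_neutral_cong_left) (auto simp: scaleF_def fun_eq_iff)
  finally show ?thesis using that[of "\<lambda>b. if b \<in> A then u (ev b) else 0"] by auto
qed

subsection \<open>Reduction on the grid and leading monomials\<close>

lemma root_poly_power_reduction:
  assumes "t \<in> {1..m}" "y \<in> S t"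
  shows "y ^ s = - (\<Sum>k<s. coeff (\<Prod>x\<in>S t. [:-x, 1:]) k * y ^ k)"
proof -
  define g where "g = (\<Prod>x\<in>S t. [:-x, 1:])"
  have dg: "degree g = s" using card_S assms(1) by (simp add: g_def degree_prod_eq_sum_degree)
  have lg: "coeff g s = 1"
    using lead_coeff_prod[of "\<lambda>x. [:-x, 1:]" "S t"] dg by (simp add: g_def)
  have "0 = poly g y" using assms(2) by (simp add: g_def poly_prod prod_zero_iff)
  also have "\<dots> = (\<Sum>k\<le>s. coeff g k * y ^ k)" using dg by (simp add: poly_altdef)
  also have "\<dots> = (\<Sum>k<s. coeff g k * y ^ k) + y ^ s"
    using lg by (simp add: lessThan_Suc_atMost[symmetric])
  finally show ?thesis by (simp add: g_def eq_neg_iff_add_eq_0 add.commute)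
qed

text \<open>On the grid, \<open>X\<^sub>t\<^sup>s\<close> can be replaced by lower powers of \<open>X\<^sub>t\<close>, because
  \<open>\<Prod>x\<in>S t. (X\<^sub>t - x)\<close> vanishes there.\<close>

lemma ev_reduce_variable:
  assumes t: "t \<in> {1..m}" "s \<le> e t"
  shows "ev e = (\<Sum>k<s. scaleF (- coeff (\<Prod>x\<in>S t. [:-x, 1:]) k) (ev (e(t := e t - s + k))))"
proof
  fix p
  let ?c = "coeff (\<Prod>x\<in>S t. [:-x, 1:])"
  show "ev e p = (\<Sum>k<s. scaleF (- ?c k) (ev (e(t := e t - s + k)))) p"
  proof (cases "p \<in> P")
    case False then show ?thesis by (simp add: sum_fun_apply ev_outside)
  next
    case True
    then have pt: "p t \<in> S t" using t by (auto simp: points_def)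
    define R where "R = (\<Prod>u\<in>{1..m}-{t}. p u ^ e u)"
    have ev_k: "ev (e(t := e t - s + k)) p = p t ^ (e t - s + k) * R" for k
      using True t by (simp add: ev_inside R_def prod.remove)
    have "ev e p = p t ^ (e t - s) * p t ^ s * R"
      using True t by (simp add: ev_inside R_def prod.remove power_add[symmetric])
    also have "\<dots> = (\<Sum>k<s. - ?c k * (p t ^ (e t - s + k) * R))"
      unfolding root_poly_power_reduction[OF t(1) pt]
      by (simp add: sum_distrib_left sum_distrib_right power_add algebra_simps sum_negf)
    finally show ?thesis by (simp add: sum_fun_apply ev_k)
  qed
qed

lemma ev_in_span_deglex_le:
  assumes "e \<in> expvecs m"
  shows "ev e \<in> fspan (ev ` {b\<in>\<Delta>. deglex_le m b e})"
  using assms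
proof (induction "\<Sum>t=1..m. e t" arbitrary: e rule: less_induct)
  case less
  show ?case
  proof (cases "e \<in> \<Delta>")
    case True then show ?thesis by (intro fv.span_base) (auto simp: deglex_le_def)
  next
    case False
    then obtain t where t: "t \<in> {1..m}" "s \<le> e t"
      using less.prems by (auto simp: Delta_def expvecs_def not_less)
    define ek where "ek k = e(t := e t - s + k)" for k
    have "ev (ek k) \<in> fspan (ev ` {b\<in>\<Delta>. deglex_le m b e})" if k: "k < s" for k
    proof -
      have sum_ek: "(\<Sum>u=1..m. ek k u) + s = (\<Sum>u=1..m. e u) + k"
      proof -
        have "(\<Sum>u\<in>{1..m}-{t}. ek k u) = (\<Sum>u\<in>{1..m}-{t}. e u)"
          by (intro sum.cong) (auto simp: ek_def)
        then show ?thesis using t by (simp add: sum.remove ek_def)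
      qed
      then have deg: "(\<Sum>u=1..m. ek k u) < (\<Sum>u=1..m. e u)" using k by linarith
      have "ek k \<in> expvecs m" using less.prems t by (auto simp: ek_def expvecs_def)
      then have "ev (ek k) \<in> fspan (ev ` {b\<in>\<Delta>. deglex_le m b (ek k)})"
        by (rule less.hyps[OF deg])
      also have "\<dots> \<subseteq> fspan (ev ` {b\<in>\<Delta>. deglex_le m b e})"
        using deglex_less_if_degree_less[OF deg]
        by (intro fv.span_mono image_mono) (auto simp: deglex_le_def intro: deglex_le_less_trans)
      finally show ?thesis .
    qed
    then show ?thesis
      unfolding ev_reduce_variable[of t e, OF t] ek_def[symmetric] by (intro fv.span_sum fv.span_scale) auto
  qed
qed

definition below :: "(nat \<Rightarrow> nat) \<Rightarrow> (nat \<Rightarrow> nat) set" where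
  "below a = {b \<in> \<Delta>. deglex_less m b a}"

definition initial_segment :: "(nat \<Rightarrow> nat) set \<Rightarrow> bool" where
  "initial_segment L \<longleftrightarrow> L \<subseteq> \<Delta> \<and> (\<forall>a\<in>L. \<forall>b\<in>\<Delta>. deglex_less m b a \<longrightarrow> b \<in> L)"

text \<open>\<open>leading_on Z a\<close>: some polynomial with leading monomial \<open>X\<^sup>a\<close> vanishes on \<open>Z\<close>.
  The remaining \<open>a \<in> \<Delta>\<close> form the footprint of the vanishing ideal of \<open>Z\<close>.\<close>

definition leading_on :: "(nat \<Rightarrow> 'a) set \<Rightarrow> (nat \<Rightarrow> nat) \<Rightarrow> bool" where
  "leading_on Z a \<longleftrightarrow> a \<in> \<Delta> \<and> (\<exists>h\<in>fspan (ev ` below a). \<forall>p\<in>Z. ev a p = h p)"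

lemma initial_segment_empty: "initial_segment {}"
  by (simp add: initial_segment_def)

lemma initial_segment_Delta: "initial_segment \<Delta>"
  by (simp add: initial_segment_def)

lemma finite_initial_segment: "initial_segment L \<Longrightarrow> finite L"
  using finite_Delta finite_subset by (auto simp: initial_segment_def)

lemma leading_on_mdvd:
  assumes lead: "leading_on Z a" and c: "c \<in> \<Delta>" and dvd: "mdvd a c"
  shows "leading_on Z c"
proof -
  obtain h where h: "h \<in> fspan (ev ` below a)" "\<forall>p\<in>Z. ev a p = h p"
    using lead by (auto simp: leading_on_def)
  have a: "a \<in> \<Delta>" using lead by (simp add: leading_on_def)
  define d where "d = (\<lambda>t. c t - a t)"
  have cad: "c = a + d" using dvd by (auto simp: d_def mdvd_def fun_eq_iff)
  have d: "d \<in> expvecs m" using c a by (auto simp: d_def expvecs_def Delta_def)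
  have "ev b' \<in> fspan (ev ` below c)" if b': "b' \<in> (\<lambda>b. b + d) ` below a" for b'
  proof -
    obtain b where b: "b \<in> below a" "b' = b + d" using b' by blast
    have "b \<in> expvecs m" using b Delta_subset_expvecs[of m s] by (auto simp: below_def)
    then have "b' \<in> expvecs m" using d b by (simp add: expvecs_def)
    then have "ev b' \<in> fspan (ev ` {b''\<in>\<Delta>. deglex_le m b'' b'})" by (rule ev_in_span_deglex_le)
    also have "\<dots> \<subseteq> fspan (ev ` below c)"
      using b cad deglex_less_add_right[of m b a d]
      by (intro fv.span_mono image_mono) (auto simp: below_def intro: deglex_le_less_trans)
    finally show ?thesis .
  qed
  then have "(\<lambda>g p. g p * ev d p) ` ev ` below a \<subseteq> fspan (ev ` below c)"
    by (auto simp: ev_add[symmetric])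
  then have "fspan ((\<lambda>g p. g p * ev d p) ` ev ` below a) \<subseteq> fspan (ev ` below c)"
    by (rule fv.span_minimal[OF _ fv.subspace_span])
  moreover have "(\<lambda>p. h p * ev d p) \<in> fspan ((\<lambda>g p. g p * ev d p) ` ev ` below a)"
    by (rule mult_right_in_span[OF h(1)])
  moreover have "\<forall>p\<in>Z. ev c p = h p * ev d p" using h(2) by (simp add: cad ev_add)
  ultimately show ?thesis using c by (auto simp: leading_on_def)
qed

lemma initial_segment_remove_greatest:
  assumes L: "initial_segment L" "L \<noteq> {}"
  obtains a where "a \<in> L" "L - {a} = below a" "initial_segment (L - {a})"
proof -
  have LD: "L \<subseteq> \<Delta>" using L by (simp add: initial_segment_def)
  obtain a where a: "a \<in> L" "\<forall>b\<in>L. b \<noteq> a \<longrightarrow> deglex_less m b a"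
    using deglex_greatest_exists[OF finite_initial_segment[OF L(1)] L(2)] LD
      Delta_subset_expvecs[of m s] by blast
  have eq: "L - {a} = below a"
  proof
    show "L - {a} \<subseteq> below a" using a LD by (auto simp: below_def)
    show "below a \<subseteq> L - {a}"
      using L a deglex_less_irrefl by (auto simp: below_def initial_segment_def)
  qed
  have "initial_segment (below a)"
    unfolding initial_segment_def below_def by (auto intro: deglex_less_trans)
  then show ?thesis using that a(1) eq by simp
qed

lemma initial_segment_induct:
  assumes La: "initial_segment La" and L: "initial_segment L" "La \<subseteq> L" and base: "Q La"
    and step: "\<And>L a. initial_segment L \<Longrightarrow> La \<subseteq> L \<Longrightarrow> a \<in> \<Delta> \<Longrightarrow> a \<notin> L \<Longrightarrow> L = below a
      \<Longrightarrow> Q L \<Longrightarrow> Q (insert a L)"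
  shows "Q L"
  using L
proof (induction "card (L - La)" arbitrary: L rule: less_induct)
  case less
  show ?case
  proof (cases "L = La")
    case True then show ?thesis using base by simp
  next
    case False
    then have "L \<noteq> {}" using less.prems by auto
    then obtain a where a: "a \<in> L" "L - {a} = below a" "initial_segment (L - {a})"
      using initial_segment_remove_greatest less.prems(1) by blast
    have aD: "a \<in> \<Delta>" using a(1) less.prems(1) by (auto simp: initial_segment_def)
    have "a \<notin> La"
    proof
      assume "a \<in> La"
      then have "L \<subseteq> La" using La a(2) aD by (auto simp: initial_segment_def below_def)
      then show False using False less.prems by blast
    qed
    then have sub: "La \<subseteq> L - {a}" using less.prems by blast
    have "card (L - {a} - La) < card (L - La)"
      using finite_initial_segment[OF less.prems(1)] a(1) \<open>a \<notin> La\<close>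
      by (intro psubset_card_mono) auto
    then have "Q (L - {a})" by (rule less.hyps[OF _ a(3) sub])
    then have "Q (insert a (L - {a}))" using step[OF a(3) sub aD _ a(2)] by blast
    then show ?thesis using a(1) by (simp add: insert_absorb)
  qed
qed

subsection \<open>The footprint bound\<close>

lemma in_span_below_if_not_leading:
  assumes a: "a \<in> \<Delta>" "\<not> leading_on Z a"
    and x: "x \<in> fspan (ev ` insert a (below a))" "\<forall>p\<in>Z. x p = 0"
  shows "x \<in> fspan (ev ` below a)"
proof -
  obtain k where k: "x - scaleF k (ev a) \<in> fspan (ev ` below a)"
    using x(1) by (auto simp: fv.span_breakdown_eq)
  have "k = 0"
  proof (rule ccontr)
    assume k0: "k \<noteq> 0"
    define h where "h = scaleF (- inverse k) (x - scaleF k (ev a))"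
    have "h \<in> fspan (ev ` below a)" unfolding h_def using k by (rule fv.span_scale)
    moreover have "\<forall>p\<in>Z. ev a p = h p" using x(2) k0 by (simp add: h_def field_simps)
    ultimately show False using a by (auto simp: leading_on_def)
  qed
  then show ?thesis using k by simp
qed

lemma fdim_le_card_leading:
  assumes U: "fsubspace U" "U \<subseteq> fspan (ev ` Lb)" "U \<inter> fspan (ev ` La) = {0}"
    and Z: "\<forall>u\<in>U. \<forall>p\<in>Z. u p = 0"
    and La: "initial_segment La" and Lb: "initial_segment Lb" "La \<subseteq> Lb"
  shows "fdim U \<le> card ((Lb - La) \<inter> {a. leading_on Z a})"
proof -
  have UF: "U \<subseteq> fspan (unit_word ` P)"
    using U(2) span_ev_supported words_subset_span_unit_words by blast
  have "fdim (U \<inter> fspan (ev ` L)) \<le> card ((L - La) \<inter> {a. leading_on Z a})"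
    if "initial_segment L" "La \<subseteq> L" for L
    using La that
  proof (rule initial_segment_induct)
    show "fdim (U \<inter> fspan (ev ` La)) \<le> card ((La - La) \<inter> {a. leading_on Z a})"
      using U(3) fdim_eq_0_if_subset_zero[of "U \<inter> fspan (ev ` La)"] by simp
  next
    fix L a assume L: "initial_segment L" "La \<subseteq> L" "a \<in> \<Delta>" "a \<notin> L" "L = below a"
      and IH: "fdim (U \<inter> fspan (ev ` L)) \<le> card ((L - La) \<inter> {a. leading_on Z a})"
    show "fdim (U \<inter> fspan (ev ` insert a L)) \<le> card ((insert a L - La) \<inter> {a. leading_on Z a})"
    proof (cases "leading_on Z a")
      case True
      have "(insert a L - La) \<inter> {a. leading_on Z a} = insert a ((L - La) \<inter> {a. leading_on Z a})"
        using True L(2,4) by auto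
      moreover have "finite ((L - La) \<inter> {a. leading_on Z a})"
        using finite_initial_segment[OF L(1)] by simp
      moreover have "fdim (U \<inter> fspan (insert (ev a) (ev ` L))) \<le> fdim (U \<inter> fspan (ev ` L)) + 1"
        by (rule fdim_inter_span_insert_le[OF U(1) UF finite_imageI[OF finite_points]])
      ultimately show ?thesis using IH L(4) by simp
    next
      case False
      have "U \<inter> fspan (ev ` insert a L) \<subseteq> U \<inter> fspan (ev ` L)"
        using in_span_below_if_not_leading[OF L(3) False] Z L(5) by blast
      then have "U \<inter> fspan (ev ` insert a L) \<subseteq> fspan (U \<inter> fspan (ev ` L))"
        using fv.span_superset by blast
      moreover have "U \<inter> fspan (ev ` L) \<subseteq> fspan (unit_word ` P)" using UF by blast
      ultimately have "fdim (U \<inter> fspan (ev ` insert a L)) \<le> fdim (U \<inter> fspan (ev ` L))"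
        using fdim_le_if_subset_span finite_imageI[OF finite_points] by blast
      moreover have "(insert a L - La) \<inter> {a. leading_on Z a} = (L - La) \<inter> {a. leading_on Z a}"
        using False by auto
      ultimately show ?thesis using IH by simp
    qed
  qed
  from this[OF Lb] show ?thesis using U(2) by (simp add: Int_absorb2)
qed

definition dot :: "((nat \<Rightarrow> 'a) \<Rightarrow> 'a) \<Rightarrow> ((nat \<Rightarrow> 'a) \<Rightarrow> 'a) \<Rightarrow> 'a" where
  "dot u c = (\<Sum>p\<in>P. c p * u p)"

lemma dot_add_right: "dot u (x + y) = dot u x + dot u y"
  by (simp add: dot_def algebra_simps sum.distrib)

lemma dot_diff_right: "dot u (x - y) = dot u x - dot u y"
  by (simp add: dot_def algebra_simps sum_subtractf)

lemma dot_scale_right: "dot u (scaleF k x) = k * dot u x"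
  by (simp add: dot_def algebra_simps sum_distrib_left)

lemma dot_zero_left: "dot 0 c = 0"
  by (simp add: dot_def)

lemma dot_add_left: "dot (x + y) c = dot x c + dot y c"
  by (simp add: dot_def algebra_simps sum.distrib)

lemma dot_diff_left: "dot (u - w) x = dot u x - dot w x"
  by (simp add: dot_def algebra_simps sum_subtractf)

lemma dot_scale_left: "dot (scaleF k u) x = k * dot u x"
  by (simp add: dot_def algebra_simps sum_distrib_left)

lemma dot_sum_left: "dot (\<Sum>a\<in>K. f a) c = (\<Sum>a\<in>K. dot (f a) c)"
  unfolding dot_def by (simp add: sum_fun_apply sum_distrib_left) (rule sum.swap)

lemma dot_unit_word:
  assumes "q \<in> P" shows "dot u (unit_word q) = u q"
proof -
  have "dot u (unit_word q) = (\<Sum>p\<in>P. if p = q then u p else 0)"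
    unfolding dot_def by (intro sum.cong) (auto simp: unit_word_def)
  then show ?thesis using assms finite_points by simp
qed

lemma dot_zero_on_span:
  assumes "\<forall>c\<in>X. dot u c = 0" "c \<in> fspan X" shows "dot u c = 0"
proof -
  have "fsubspace {c. dot u c = 0}"
    by (auto simp: fv.subspace_def dot_add_right dot_scale_right) (simp add: dot_def)
  then have "fspan X \<subseteq> {c. dot u c = 0}" using assms(1) by (intro fv.span_minimal) auto
  then show ?thesis using assms(2) by blast
qed

lemma dualcode_eq: "dualcode P C = {u \<in> words. \<forall>c\<in>C. dot u c = 0}"
  by (auto simp: dualcode_def supported_on_def dot_def)

definition annihilated :: "((nat \<Rightarrow> 'a) \<Rightarrow> 'a) set \<Rightarrow> (nat \<Rightarrow> nat) set \<Rightarrow> ((nat \<Rightarrow> 'a) \<Rightarrow> 'a) set" where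
  "annihilated U L = {u\<in>U. \<forall>c\<in>fspan (ev ` L). dot u c = 0}"

lemma subspace_annihilated:
  assumes "fsubspace U" shows "fsubspace (annihilated U L)"
  using assms unfolding annihilated_def fv.subspace_def
  by (auto simp: dot_add_left dot_scale_left dot_zero_left)

lemma annihilated_insert:
  "annihilated U (insert a L) = {u \<in> annihilated U L. dot u (ev a) = 0}"
proof
  show "annihilated U (insert a L) \<subseteq> {u \<in> annihilated U L. dot u (ev a) = 0}"
    unfolding annihilated_def
    using fv.span_mono[of "ev ` L" "ev ` insert a L"] fv.span_base[of "ev a" "ev ` insert a L"]
    by blast
  show "{u \<in> annihilated U L. dot u (ev a) = 0} \<subseteq> annihilated U (insert a L)"
  proof
    fix u assume u: "u \<in> {u \<in> annihilated U L. dot u (ev a) = 0}"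
    have "dot u c = 0" if c: "c \<in> fspan (ev ` insert a L)" for c
    proof -
      obtain k where "c - scaleF k (ev a) \<in> fspan (ev ` L)"
        using c by (auto simp: fv.span_breakdown_eq)
      then have "dot u (c - scaleF k (ev a)) = 0" using u by (auto simp: annihilated_def)
      then show ?thesis using u by (simp add: dot_diff_right dot_scale_right)
    qed
    then show "u \<in> annihilated U (insert a L)" using u by (auto simp: annihilated_def)
  qed
qed

lemma annihilated_insert_if_leading:
  assumes "leading_on J a" "U \<subseteq> supported_on J"
  shows "annihilated U (insert a (below a)) = annihilated U (below a)"
proof -
  obtain h where h: "h \<in> fspan (ev ` below a)" "\<forall>p\<in>J. ev a p = h p"
    using assms(1) by (auto simp: leading_on_def)
  have "dot u (ev a) = dot u h" if "u \<in> U" for u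
    unfolding dot_def using that assms(2) h(2) by (intro sum.cong refl) (auto simp: supported_on_def)
  moreover have "dot u h = 0" if "u \<in> annihilated U (below a)" for u
    using that h(1) by (auto simp: annihilated_def)
  ultimately show ?thesis unfolding annihilated_insert by (auto simp: annihilated_def)
qed

lemma fdim_le_card_footprint:
  assumes J: "J \<subseteq> P" and U: "fsubspace U" "U \<subseteq> supported_on J"
    and La: "initial_segment La" and Lb: "initial_segment Lb" "La \<subseteq> Lb"
    and perp: "annihilated U La = U" and triv: "annihilated U Lb \<subseteq> {0}"
  shows "fdim U \<le> card ((Lb - La) \<inter> {a. \<not> leading_on J a})"
proof -
  have "annihilated U L \<subseteq> words" for L
    using U(2) J by (auto simp: annihilated_def supported_on_def)
  then have UF: "annihilated U L \<subseteq> fspan (unit_word ` P)" for L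
    using words_subset_span_unit_words by blast
  have "fdim U \<le> fdim (annihilated U L) + card ((L - La) \<inter> {a. \<not> leading_on J a})"
    if "initial_segment L" "La \<subseteq> L" for L
    using La that
  proof (rule initial_segment_induct)
    show "fdim U \<le> fdim (annihilated U La) + card ((La - La) \<inter> {a. \<not> leading_on J a})"
      using perp by simp
  next
    fix L a assume L: "initial_segment L" "La \<subseteq> L" "a \<in> \<Delta>" "a \<notin> L" "L = below a"
      and IH: "fdim U \<le> fdim (annihilated U L) + card ((L - La) \<inter> {a. \<not> leading_on J a})"
    show "fdim U \<le> fdim (annihilated U (insert a L)) + card ((insert a L - La) \<inter> {a. \<not> leading_on J a})"
    proof (cases "leading_on J a")
      case True
      then have "(insert a L - La) \<inter> {a. \<not> leading_on J a} = (L - La) \<inter> {a. \<not> leading_on J a}"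
        by auto
      then show ?thesis using IH annihilated_insert_if_leading[OF True U(2)] L(5) by simp
    next
      case False
      have "fdim (annihilated U L) \<le> fdim (annihilated U (insert a L)) + 1"
        unfolding annihilated_insert
        by (rule fdim_le_kernel_plus_one[OF subspace_annihilated[OF U(1)] UF
              finite_imageI[OF finite_points]]) (simp add: dot_diff_left dot_scale_left)
      moreover have "(insert a L - La) \<inter> {a. \<not> leading_on J a} = insert a ((L - La) \<inter> {a. \<not> leading_on J a})"
        using False L(2,4) by auto
      moreover have "finite ((L - La) \<inter> {a. \<not> leading_on J a})"
        using finite_initial_segment[OF L(1)] by simp
      ultimately show ?thesis using IH L(4) by simp
    qed
  qed
  from this[OF Lb] show ?thesis using fdim_eq_0_if_subset_zero[OF triv] by simp
qed

lemma card_leading_ge: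
  assumes Z: "Z \<subseteq> P" shows "card P - card Z \<le> card {a \<in> \<Delta>. leading_on Z a}"
proof -
  let ?U = "supported_on (P - Z) :: ((nat \<Rightarrow> 'a) \<Rightarrow> 'a) set"
  have "?U \<subseteq> fspan (ev ` \<Delta>)" using span_ev_Delta by (auto simp: supported_on_def)
  moreover have "?U \<inter> fspan (ev ` {}) = {0}"
    using fv.subspace_0[OF subspace_supported_on] by auto
  ultimately have "fdim ?U \<le> card ((\<Delta> - {}) \<inter> {a. leading_on Z a})"
    by (intro fdim_le_card_leading[OF subspace_supported_on _ _ _ initial_segment_empty
          initial_segment_Delta]) (auto simp: supported_on_def)
  moreover have "fdim ?U = card P - card Z"
    using fdim_supported_on[of "P - Z"] finite_points Z by (simp add: card_Diff_subset finite_subset)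
  ultimately show ?thesis by (simp add: Collect_conj_eq Int_commute)
qed

lemma card_footprint_ge:
  assumes J: "J \<subseteq> P" shows "card J \<le> card {a \<in> \<Delta>. \<not> leading_on J a}"
proof -
  let ?U = "supported_on J :: ((nat \<Rightarrow> 'a) \<Rightarrow> 'a) set"
  have "annihilated ?U {} = ?U" by (auto simp: annihilated_def dot_def)
  moreover have "annihilated ?U \<Delta> \<subseteq> {0}"
  proof
    fix u assume u: "u \<in> annihilated ?U \<Delta>"
    have "u q = 0" for q
    proof (cases "q \<in> P")
      case True
      then have "unit_word q \<in> fspan (ev ` \<Delta>)" by (rule unit_word_in_span_ev)
      then show ?thesis using u True by (auto simp: annihilated_def dot_unit_word)
    next
      case False then show ?thesis using u J by (auto simp: annihilated_def supported_on_def)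
    qed
    then show "u \<in> {0}" by auto
  qed
  ultimately have "fdim ?U \<le> card ((\<Delta> - {}) \<inter> {a. \<not> leading_on J a})"
    by (intro fdim_le_card_footprint[OF J subspace_supported_on _ initial_segment_empty
          initial_segment_Delta]) auto
  moreover have "fdim ?U = card J" using fdim_supported_on finite_points J finite_subset by metis
  ultimately show ?thesis by (simp add: Collect_conj_eq Int_commute)
qed

theorem card_footprint:
  assumes "Z \<subseteq> P"
  shows "card {a \<in> \<Delta>. \<not> leading_on Z a} = card Z"
    and "card {a \<in> \<Delta>. leading_on Z a} = card P - card Z"
proof -
  have "card ({a \<in> \<Delta>. leading_on Z a} \<union> {a \<in> \<Delta>. \<not> leading_on Z a})
      = card {a \<in> \<Delta>. leading_on Z a} + card {a \<in> \<Delta>. \<not> leading_on Z a}"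
    by (rule card_Un_disjoint) (use finite_Delta in auto)
  moreover have "{a \<in> \<Delta>. leading_on Z a} \<union> {a \<in> \<Delta>. \<not> leading_on Z a} = \<Delta>" by blast
  ultimately have "card {a \<in> \<Delta>. leading_on Z a} + card {a \<in> \<Delta>. \<not> leading_on Z a} = card P"
    using card_Delta card_points by simp
  moreover have "card Z \<le> card P" using assms finite_points by (simp add: card_mono)
  ultimately show "card {a \<in> \<Delta>. \<not> leading_on Z a} = card Z"
    and "card {a \<in> \<Delta>. leading_on Z a} = card P - card Z"
    using card_leading_ge[OF assms] card_footprint_ge[OF assms] by linarith+
qed

subsection \<open>Subspaces attaining the bounds\<close>

definition enum :: "nat \<Rightarrow> nat \<Rightarrow> 'a" where
  "enum t = (SOME h. bij_betw h {..<s} (S t))"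

definition index :: "nat \<Rightarrow> 'a \<Rightarrow> nat" where
  "index t y = the_inv_into {..<s} (enum t) y"

lemma bij_enum: "t \<in> {1..m} \<Longrightarrow> bij_betw (enum t) {..<s} (S t)"
proof -
  assume t: "t \<in> {1..m}"
  obtain h where "bij_betw h {0..<card (S t)} (S t)" using ex_bij_betw_nat_finite[of "S t"] by auto
  then have "\<exists>h. bij_betw h {..<s} (S t)" using card_S t by (auto simp: atLeast0LessThan)
  then show ?thesis unfolding enum_def by (rule someI_ex)
qed

lemma index_less: "t \<in> {1..m} \<Longrightarrow> y \<in> S t \<Longrightarrow> index t y < s"
  unfolding index_def using bij_betw_apply[OF bij_betw_the_inv_into[OF bij_enum]] by blast

lemma enum_index: "t \<in> {1..m} \<Longrightarrow> y \<in> S t \<Longrightarrow> enum t (index t y) = y"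
  unfolding index_def by (rule f_the_inv_into_f_bij_betw[OF bij_enum])

text \<open>\<open>fall_word a\<close> evaluates \<open>\<Prod>\<^sub>t \<Prod>\<^sub>j\<^sub><\<^sub>a\<^sub>t (X\<^sub>t - enum t j)\<close>: its leading
  monomial is \<open>X\<^sup>a\<close>, and it vanishes at every grid point \<open>p\<close> with \<open>index t (p t) < a t\<close> for
  some \<open>t\<close>.\<close>

definition fall_poly :: "(nat \<Rightarrow> nat) \<Rightarrow> nat \<Rightarrow> 'a poly" where
  "fall_poly a t = (\<Prod>j<a t. [:- enum t j, 1:])"

definition fall_coeff :: "(nat \<Rightarrow> nat) \<Rightarrow> (nat \<Rightarrow> nat) \<Rightarrow> 'a" where
  "fall_coeff a b = (\<Prod>t\<in>{1..m}. coeff (fall_poly a t) (b t))"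

definition fall_word :: "(nat \<Rightarrow> nat) \<Rightarrow> ((nat \<Rightarrow> 'a) \<Rightarrow> 'a)" where
  "fall_word a = (\<lambda>p. if p \<in> P then \<Prod>t\<in>{1..m}. \<Prod>j<a t. (p t - enum t j) else 0)"

lemma degree_fall_poly: "degree (fall_poly a t) = a t"
  unfolding fall_poly_def by (subst degree_prod_eq_sum_degree) auto

lemma coeff_fall_poly_top: "coeff (fall_poly a t) (a t) = 1"
  using lead_coeff_prod[of "\<lambda>j. [:- enum t j, 1:]" "{..<a t}"] degree_fall_poly[of a t]
  by (simp add: fall_poly_def)

lemma fall_coeff_self: "fall_coeff a a = 1"
  by (simp add: fall_coeff_def coeff_fall_poly_top)

lemma poly_fall_poly: "poly (fall_poly a t) y = (\<Prod>j<a t. (y - enum t j))"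
  by (simp add: fall_poly_def poly_prod)

lemma fall_word_eq_sum:
  assumes a: "a \<in> \<Delta>" shows "fall_word a = (\<Sum>b\<in>\<Delta>. scaleF (fall_coeff a b) (ev b))"
proof -
  have "\<forall>t\<in>{1..m}. degree (fall_poly a t) < s" using a by (auto simp: degree_fall_poly Delta_def)
  from product_of_polys_as_ev_sum[OF this]
  show ?thesis unfolding poly_fall_poly by (simp add: fall_word_def fall_coeff_def)
qed

lemma deglex_le_if_fall_coeff_nonzero:
  assumes "fall_coeff a b \<noteq> 0" "a \<in> \<Delta>" "b \<in> \<Delta>" shows "deglex_le m b a"
proof -
  have "b t \<le> a t" for t
  proof (cases "t \<in> {1..m}")
    case True
    show ?thesis
    proof (rule ccontr)
      assume "\<not> b t \<le> a t"
      then have "coeff (fall_poly a t) (b t) = 0" by (intro coeff_eq_0) (simp add: degree_fall_poly)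
      then show False using assms(1) True by (auto simp: fall_coeff_def)
    qed
  next
    case False then show ?thesis using assms(3) by (simp add: Delta_def)
  qed
  then have "mdvd b a" by (simp add: mdvd_def)
  then show ?thesis
    using deglex_less_if_mdvd[of a m b] assms(2,3) Delta_subset_expvecs by (auto simp: deglex_le_def)
qed

lemma sum_fall_words_eq:
  assumes K: "K \<subseteq> \<Delta>"
  shows "(\<Sum>a\<in>K. scaleF (c a) (fall_word a)) = (\<Sum>b\<in>\<Delta>. scaleF (\<Sum>a\<in>K. c a * fall_coeff a b) (ev b))"
proof
  fix p
  have "(\<Sum>a\<in>K. scaleF (c a) (fall_word a)) p = (\<Sum>a\<in>K. \<Sum>b\<in>\<Delta>. c a * fall_coeff a b * ev b p)"
    using K by (auto simp: sum_fun_apply fall_word_eq_sum sum_distrib_left mult.assoc intro!: sum.cong)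
  also have "\<dots> = (\<Sum>b\<in>\<Delta>. \<Sum>a\<in>K. c a * fall_coeff a b * ev b p)" by (rule sum.swap)
  finally show "(\<Sum>a\<in>K. scaleF (c a) (fall_word a)) p
      = (\<Sum>b\<in>\<Delta>. scaleF (\<Sum>a\<in>K. c a * fall_coeff a b) (ev b)) p"
    by (simp add: sum_fun_apply sum_distrib_right)
qed

text \<open>Triangularity: in a nontrivial combination of fall words, the coefficient of \<open>ev a\<^sub>0\<close> for
  the deglex-largest \<open>a\<^sub>0\<close> with nonzero weight is that weight.\<close>

lemma fall_words_independent_modulo:
  assumes K: "K \<subseteq> \<Delta>" and La: "La \<subseteq> \<Delta>" and disj: "K \<inter> La = {}"
    and span: "(\<Sum>a\<in>K. scaleF (c a) (fall_word a)) \<in> fspan (ev ` La)"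
  shows "\<forall>a\<in>K. c a = 0"
proof (rule ccontr)
  assume "\<not> (\<forall>a\<in>K. c a = 0)"
  define N where "N = {a\<in>K. c a \<noteq> 0}"
  have fK: "finite K" using K finite_Delta finite_subset by blast
  have "finite N" "N \<noteq> {}" "N \<subseteq> expvecs m"
    using fK \<open>\<not> (\<forall>a\<in>K. c a = 0)\<close> K Delta_subset_expvecs[of m s] by (auto simp: N_def)
  then obtain a0 where a0: "a0 \<in> N" "\<forall>b\<in>N. b \<noteq> a0 \<longrightarrow> deglex_less m b a0"
    using deglex_greatest_exists by blast
  have a0K: "a0 \<in> K" "c a0 \<noteq> 0" "a0 \<in> \<Delta>" using a0 K by (auto simp: N_def)
  obtain y where y: "(\<Sum>a\<in>K. scaleF (c a) (fall_word a)) = (\<Sum>b\<in>\<Delta>. scaleF (y b) (ev b))"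
    "\<forall>b. b \<notin> La \<longrightarrow> y b = 0"
    using span_ev_coeffs[OF La span] by blast
  have "(\<Sum>b\<in>\<Delta>. scaleF (\<Sum>a\<in>K. c a * fall_coeff a b) (ev b)) = (\<Sum>b\<in>\<Delta>. scaleF (y b) (ev b))"
    using y(1) sum_fall_words_eq[OF K] by simp
  from ev_coeffs_unique[OF this a0K(3)] have "(\<Sum>a\<in>K. c a * fall_coeff a a0) = y a0" .
  also have "\<dots> = 0" using y(2) a0K disj by blast
  finally have s0: "(\<Sum>a\<in>K. c a * fall_coeff a a0) = 0" .
  have "c a * fall_coeff a a0 = 0" if a: "a \<in> K - {a0}" for a
  proof (rule ccontr)
    assume nz: "c a * fall_coeff a a0 \<noteq> 0"
    then have "a \<in> N" using a by (simp add: N_def)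
    then have "deglex_less m a a0" using a0 a by blast
    moreover have "deglex_le m a0 a"
      using deglex_le_if_fall_coeff_nonzero[of a a0] nz a K a0K by auto
    ultimately show False
      using deglex_less_irrefl[of m a] deglex_less_trans[of m a a0 a] by (auto simp: deglex_le_def)
  qed
  then have "(\<Sum>a\<in>K - {a0}. c a * fall_coeff a a0) = 0" by (intro sum.neutral) blast
  then have "(\<Sum>a\<in>K. c a * fall_coeff a a0) = c a0 * fall_coeff a0 a0"
    using sum.remove[OF fK a0K(1), of "\<lambda>a. c a * fall_coeff a a0"] by simp
  then show False using s0 a0K fall_coeff_self by simp
qed

lemma fall_word_in_span:
  assumes "initial_segment L" "a \<in> L" shows "fall_word a \<in> fspan (ev ` L)"
proof -
  have aD: "a \<in> \<Delta>" using assms by (auto simp: initial_segment_def)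
  have "scaleF (fall_coeff a b) (ev b) \<in> fspan (ev ` L)" if b: "b \<in> \<Delta>" for b
  proof (cases "fall_coeff a b = 0")
    case True then show ?thesis using fv.span_zero by (simp add: scaleF_def zero_fun_def)
  next
    case False
    then have "deglex_le m b a" using deglex_le_if_fall_coeff_nonzero aD b by blast
    then have "b \<in> L" using assms b by (auto simp: initial_segment_def deglex_le_def)
    then show ?thesis by (intro fv.span_scale fv.span_base) auto
  qed
  then show ?thesis unfolding fall_word_eq_sum[OF aD] by (intro fv.span_sum) auto
qed

definition index_vec :: "(nat \<Rightarrow> 'a) \<Rightarrow> (nat \<Rightarrow> nat)" where
  "index_vec p = (\<lambda>t. if t \<in> {1..m} then index t (p t) else 0)"

lemma inj_on_index_vec: "inj_on index_vec P"
proof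
  fix p q assume pq: "p \<in> P" "q \<in> P" "index_vec p = index_vec q"
  show "p = q"
    using pq(1,2) unfolding points_def
  proof (rule PiE_ext)
    fix t assume t: "t \<in> {1..m}"
    have "index t (p t) = index t (q t)" using pq(3) t by (simp add: index_vec_def fun_eq_iff) metis
    moreover have "p t \<in> S t" "q t \<in> S t" using pq t by (auto simp: points_def)
    ultimately show "p t = q t" using enum_index[OF t] by metis
  qed
qed

lemma index_vec_if_fall_word_nonzero:
  assumes "fall_word a p \<noteq> 0" "a \<in> \<Delta>"
  shows "index_vec p \<in> \<Delta>" "mdvd a (index_vec p)"
proof -
  have p: "p \<in> P" using assms(1) by (auto simp: fall_word_def split: if_splits)
  have pS: "p t \<in> S t" if "t \<in> {1..m}" for t using p that by (auto simp: points_def)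
  show "index_vec p \<in> \<Delta>" using index_less[OF _ pS] by (auto simp: index_vec_def Delta_def)
  have "a t \<le> index t (p t)" if t: "t \<in> {1..m}" for t
  proof (rule ccontr)
    assume "\<not> a t \<le> index t (p t)"
    then have "p t - enum t (index t (p t)) = 0 \<and> index t (p t) < a t"
      using enum_index[OF t pS[OF t]] by simp
    then have "(\<Prod>j<a t. (p t - enum t j)) = 0" by (intro prod_zero) auto
    then have "(\<Prod>t\<in>{1..m}. \<Prod>j<a t. (p t - enum t j)) = 0"
      using t by (intro prod_zero) auto
    then have "fall_word a p = 0" using p by (simp add: fall_word_def)
    then show False using assms(1) by simp
  qed
  moreover have "a t = 0" if "t \<notin> {1..m}" for t using assms(2) that by (simp add: Delta_def)
  ultimately show "mdvd a (index_vec p)" by (auto simp: mdvd_def index_vec_def)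
qed

lemma card_Supp_span_fall_words:
  assumes K: "K \<subseteq> \<Delta>" shows "card (Supp (fspan (fall_word ` K))) \<le> Dfoot m s K"
proof -
  have supp: "Supp (fspan (fall_word ` K)) \<subseteq> Supp (fall_word ` K)" by (rule Supp_span)
  have "index_vec p \<in> {N \<in> \<Delta>. \<exists>M\<in>K. mdvd M N}" if p: "p \<in> Supp (fall_word ` K)" for p
  proof -
    obtain a where "a \<in> K" "fall_word a p \<noteq> 0" using p by (auto simp: Supp_def)
    then show ?thesis using index_vec_if_fall_word_nonzero[of a p] K by blast
  qed
  then have img: "index_vec ` Supp (fspan (fall_word ` K)) \<subseteq> {N \<in> \<Delta>. \<exists>M\<in>K. mdvd M N}"
    using supp by blast
  have "Supp (fall_word ` K) \<subseteq> P" by (auto simp: Supp_def fall_word_def split: if_splits)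
  then have "inj_on index_vec (Supp (fspan (fall_word ` K)))"
    using supp inj_on_index_vec inj_on_subset by blast
  from card_inj_on_le[OF this img] show ?thesis using finite_Delta by (simp add: Dfoot_def)
qed

lemma exists_primal_subspace:
  assumes "K \<subseteq> Lb" "K \<inter> La = {}" "initial_segment La" "initial_segment Lb"
  obtains U where "fsubspace U" "U \<subseteq> fspan (ev ` Lb)" "fdim U = card K"
    "U \<inter> fspan (ev ` La) = {0}" "card (Supp U) \<le> Dfoot m s K"
proof
  have K: "K \<subseteq> \<Delta>" and La: "La \<subseteq> \<Delta>" using assms by (auto simp: initial_segment_def)
  have "finite K" using K finite_Delta finite_subset by blast
  note triv = fall_words_independent_modulo[OF K La assms(2)]
  have "\<forall>a\<in>K. c a = 0" if "(\<Sum>a\<in>K. scaleF (c a) (fall_word a)) = 0" for c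
    using triv[of c] that fv.span_zero by metis
  note indep = independent_image_if_combinations_trivial[OF \<open>finite K\<close> this]
  show "fsubspace (fspan (fall_word ` K))" by (rule fv.subspace_span)
  show "fspan (fall_word ` K) \<subseteq> fspan (ev ` Lb)"
    using assms fall_word_in_span by (intro fv.span_minimal[OF _ fv.subspace_span]) auto
  show "fdim (fspan (fall_word ` K)) = card K" by (rule indep(2))
  show "fspan (fall_word ` K) \<inter> fspan (ev ` La) = {0}"
  proof (intro equalityI subsetI)
    fix u assume u: "u \<in> fspan (fall_word ` K) \<inter> fspan (ev ` La)"
    then obtain c where c: "u = (\<Sum>a\<in>K. scaleF (c a) (fall_word a))"
      using combination_in_span_image[OF \<open>finite K\<close> indep(1)] by blast
    then show "u \<in> {0}" using triv[of c] u by simp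
  qed (simp add: fv.span_zero)
  show "card (Supp (fspan (fall_word ` K))) \<le> Dfoot m s K" by (rule card_Supp_span_fall_words[OF K])
qed

lemma subspace_dualcode: "fsubspace (dualcode P C)"
  unfolding fv.subspace_def dualcode_def
  by (auto simp: algebra_simps sum.distrib sum_distrib_left[symmetric])

definition unit_coeff :: "(nat \<Rightarrow> 'a) \<Rightarrow> (nat \<Rightarrow> nat) \<Rightarrow> 'a" where
  "unit_coeff q = (SOME y. unit_word q = (\<Sum>b\<in>\<Delta>. scaleF (y b) (ev b)))"

text \<open>\<open>dual_word a\<close> is the coordinate functional of \<open>ev a\<close> in the basis \<open>ev ` \<Delta>\<close>, represented
  through \<open>dot\<close>: its entry at \<open>p\<close> is the \<open>ev a\<close>-coordinate of the unit word at \<open>p\<close>.\<close>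

definition dual_word :: "(nat \<Rightarrow> nat) \<Rightarrow> ((nat \<Rightarrow> 'a) \<Rightarrow> 'a)" where
  "dual_word a = (\<lambda>p. if p \<in> P then unit_coeff p a else 0)"

lemma unit_word_eq_sum:
  assumes "q \<in> P" shows "unit_word q = (\<Sum>b\<in>\<Delta>. scaleF (unit_coeff q b) (ev b))"
proof -
  obtain y where "unit_word q = (\<Sum>b\<in>\<Delta>. scaleF (y b) (ev b))"
    using span_ev_coeffs[OF subset_refl unit_word_in_span_ev[OF assms]] .
  then have "\<exists>y. unit_word q = (\<Sum>b\<in>\<Delta>. scaleF (y b) (ev b))" by blast
  then show ?thesis unfolding unit_coeff_def by (rule someI_ex)
qed

lemma dot_dual_word_ev:
  assumes a: "a \<in> \<Delta>" and b: "b \<in> \<Delta>"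
  shows "dot (dual_word a) (ev b) = (if a = b then 1 else 0)"
proof -
  have "ev b = (\<Sum>p\<in>P. scaleF (ev b p) (unit_word p))"
    by (rule sum_unit_word[OF finite_points ev_supported])
  also have "\<dots> = (\<Sum>b'\<in>\<Delta>. scaleF (\<Sum>p\<in>P. ev b p * unit_coeff p b') (ev b'))"
  proof
    fix z
    have "(\<Sum>p\<in>P. scaleF (ev b p) (unit_word p)) z = (\<Sum>p\<in>P. \<Sum>b'\<in>\<Delta>. ev b p * unit_coeff p b' * ev b' z)"
      by (auto simp: sum_fun_apply unit_word_eq_sum sum_distrib_left mult.assoc intro!: sum.cong)
    also have "\<dots> = (\<Sum>b'\<in>\<Delta>. \<Sum>p\<in>P. ev b p * unit_coeff p b' * ev b' z)" by (rule sum.swap)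
    finally show "(\<Sum>p\<in>P. scaleF (ev b p) (unit_word p)) z
        = (\<Sum>b'\<in>\<Delta>. scaleF (\<Sum>p\<in>P. ev b p * unit_coeff p b') (ev b')) z"
      by (simp add: sum_fun_apply sum_distrib_right)
  qed
  finally have e1: "ev b = (\<Sum>b'\<in>\<Delta>. scaleF (\<Sum>p\<in>P. ev b p * unit_coeff p b') (ev b'))" .
  have e2: "ev b = (\<Sum>b'\<in>\<Delta>. scaleF (if b' = b then 1 else 0) (ev b'))"
  proof
    fix z
    have "(\<Sum>b'\<in>\<Delta>. scaleF (if b' = b then 1 else 0) (ev b')) z = (\<Sum>b'\<in>\<Delta>. if b' = b then ev b' z else 0)"
      by (auto simp: sum_fun_apply intro!: sum.cong)
    then show "ev b z = (\<Sum>b'\<in>\<Delta>. scaleF (if b' = b then 1 else 0) (ev b')) z"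
      using b finite_Delta by simp
  qed
  have "dot (dual_word a) (ev b) = (\<Sum>p\<in>P. ev b p * unit_coeff p a)"
    unfolding dot_def dual_word_def by (intro sum.cong) auto
  also have "\<dots> = (if a = b then 1 else 0)"
    using ev_coeffs_unique[OF _ a, of "\<lambda>b'. \<Sum>p\<in>P. ev b p * unit_coeff p b'"] e1 e2 by simp
  finally show ?thesis .
qed

lemma dot_sum_dual_words:
  assumes K: "K \<subseteq> \<Delta>" and b: "b \<in> K"
  shows "dot (\<Sum>a\<in>K. scaleF (c a) (dual_word a)) (ev b) = c b"
proof -
  have "finite K" using K finite_Delta finite_subset by blast
  have "dot (\<Sum>a\<in>K. scaleF (c a) (dual_word a)) (ev b) = (\<Sum>a\<in>K. c a * dot (dual_word a) (ev b))"
    by (simp add: dot_sum_left dot_scale_left)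
  also have "\<dots> = (\<Sum>a\<in>K. if a = b then c a else 0)"
  proof (intro sum.cong refl)
    fix a assume "a \<in> K"
    then have "a \<in> \<Delta>" "b \<in> \<Delta>" using K b by blast+
    then show "c a * dot (dual_word a) (ev b) = (if a = b then c a else 0)"
      by (simp add: dot_dual_word_ev)
  qed
  also have "\<dots> = c b" using \<open>finite K\<close> b by simp
  finally show ?thesis .
qed

lemma exists_dual_subspace:
  assumes KLb: "K \<subseteq> Lb" and disj: "K \<inter> La = {}"
    and La: "initial_segment La" and Lb: "initial_segment Lb"
  obtains U where "fsubspace U" "U \<subseteq> dualcode P (fspan (ev ` La))" "fdim U = card K"
    "U \<inter> dualcode P (fspan (ev ` Lb)) = {0}"
proof
  have K: "K \<subseteq> \<Delta>" and LaD: "La \<subseteq> \<Delta>" using assms by (auto simp: initial_segment_def)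
  have "finite K" using K finite_Delta finite_subset by blast
  have triv: "\<forall>a\<in>K. c a = 0" if "\<forall>b\<in>K. dot (\<Sum>a\<in>K. scaleF (c a) (dual_word a)) (ev b) = 0" for c
    using that dot_sum_dual_words[OF K] by simp
  have "\<forall>a\<in>K. c a = 0" if "(\<Sum>a\<in>K. scaleF (c a) (dual_word a)) = 0" for c
    using triv that by (simp add: dot_zero_left)
  note indep = independent_image_if_combinations_trivial[OF \<open>finite K\<close> this]
  show "fsubspace (fspan (dual_word ` K))" by (rule fv.subspace_span)
  show "fdim (fspan (dual_word ` K)) = card K" by (rule indep(2))
  show "fspan (dual_word ` K) \<subseteq> dualcode P (fspan (ev ` La))"
  proof (rule fv.span_minimal[OF _ subspace_dualcode], rule subsetI)
    fix v assume "v \<in> dual_word ` K"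
    then obtain a where a: "a \<in> K" "v = dual_word a" by blast
    have "dot (dual_word a) c = 0" if c: "c \<in> fspan (ev ` La)" for c
    proof (rule dot_zero_on_span[OF _ c], rule ballI)
      fix c' assume "c' \<in> ev ` La"
      then obtain b where b: "b \<in> La" "c' = ev b" by blast
      then have "a \<noteq> b" "a \<in> \<Delta>" "b \<in> \<Delta>" using a disj K LaD by blast+
      then show "dot (dual_word a) c' = 0" using b by (simp add: dot_dual_word_ev)
    qed
    moreover have "dual_word a \<in> words" by (simp add: dual_word_def supported_on_def)
    ultimately show "v \<in> dualcode P (fspan (ev ` La))" using a by (simp add: dualcode_eq)
  qed
  show "fspan (dual_word ` K) \<inter> dualcode P (fspan (ev ` Lb)) = {0}"
  proof (intro equalityI subsetI)
    fix u assume u: "u \<in> fspan (dual_word ` K) \<inter> dualcode P (fspan (ev ` Lb))"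
    then obtain c where c: "u = (\<Sum>a\<in>K. scaleF (c a) (dual_word a))"
      using combination_in_span_image[OF \<open>finite K\<close> indep(1)] by blast
    have "dot u (ev b) = 0" if "b \<in> K" for b
      using u KLb that fv.span_base[of "ev b" "ev ` Lb"] by (auto simp: dualcode_eq)
    then show "u \<in> {0}" using triv[of c] c by simp
  qed (use fv.subspace_0[OF subspace_dualcode] fv.span_zero in auto)
qed

end

subsection \<open>Relative generalized Hamming weights\<close>

lemma Min_eq_if_mutually_bounded:
  fixes A B :: "nat set"
  assumes "finite A" "finite B" "B \<noteq> {}" "\<forall>x\<in>A. \<exists>y\<in>B. y \<le> x" "\<forall>y\<in>B. \<exists>x\<in>A. x \<le> y"
  shows "Min A = Min B"
proof -
  have "A \<noteq> {}" using assms(3,5) by auto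
  obtain y where y: "y \<in> B" "y \<le> Min A" using assms(4) Min_in[OF assms(1) \<open>A \<noteq> {}\<close>] by blast
  obtain x where x: "x \<in> A" "x \<le> Min B" using assms(5) Min_in[OF assms(2,3)] by blast
  have "Min B \<le> Min A" by (rule order_trans[OF Min_le[OF assms(2) y(1)] y(2)])
  moreover have "Min A \<le> Min B" by (rule order_trans[OF Min_le[OF assms(1) x(1)] x(2)])
  ultimately show ?thesis by simp
qed

lemma Min_le_if_bounded:
  fixes A B :: "nat set"
  assumes "finite A" "A \<noteq> {}" "finite B" "\<forall>x\<in>A. \<exists>y\<in>B. y \<le> x"
  shows "Min B \<le> Min A"
proof -
  obtain y where y: "y \<in> B" "y \<le> Min A" using assms(4) Min_in[OF assms(1,2)] by blast
  show ?thesis by (rule order_trans[OF Min_le[OF assms(3) y(1)] y(2)])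
qed

lemma finite_values_on_subsets: "finite A \<Longrightarrow> finite {F K | K. K \<subseteq> A \<and> card K = v}"
  by (rule finite_subset[of _ "F ` Pow A"]) auto

lemma values_on_subsets_nonempty:
  assumes "finite A" "v \<le> card A" shows "{F K | K. K \<subseteq> A \<and> card K = v} \<noteq> {}"
proof -
  obtain K where "K \<subseteq> A" "card K = v" using obtain_subset_with_card_n[OF assms(2)] by metis
  then show ?thesis by blast
qed

lemma values_on_singletons: "{F K | K. K \<subseteq> A \<and> card K = 1} = (\<lambda>a. F {a}) ` A"
  by (auto simp: card_1_singleton_iff)

context grid
begin

lemma finite_card_Supp_words: "finite {card (Supp U) | U. U \<subseteq> words}"
proof (rule finite_subset[of _ "{..card P}"])
  show "{card (Supp U) | U. U \<subseteq> words} \<subseteq> {..card P}"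
    using finite_points by (auto simp: Supp_subset_iff[symmetric] card_mono)
qed simp

lemma Dfoot_le_card_Supp:
  assumes U: "fsubspace U" "U \<subseteq> fspan (ev ` Lb)" "U \<inter> fspan (ev ` La) = {0}"
    and La: "initial_segment La" and Lb: "initial_segment Lb" "La \<subseteq> Lb"
  obtains K where "K \<subseteq> Lb - La" "card K = fdim U" "Dfoot m s K \<le> card (Supp U)"
proof -
  have SP: "Supp U \<subseteq> P" using U(2) span_ev_supported by (auto simp: Supp_subset_iff)
  define Z where "Z = P - Supp U"
  have "\<forall>u\<in>U. \<forall>p\<in>Z. u p = 0" by (auto simp: Z_def Supp_def)
  then have "fdim U \<le> card ((Lb - La) \<inter> {a. leading_on Z a})"
    by (rule fdim_le_card_leading[OF U _ La Lb])
  then obtain K where K: "K \<subseteq> (Lb - La) \<inter> {a. leading_on Z a}" "card K = fdim U"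
    by (rule obtain_subset_with_card_n)
  have "{N \<in> \<Delta>. \<exists>M\<in>K. mdvd M N} \<subseteq> {a \<in> \<Delta>. leading_on Z a}"
    using K leading_on_mdvd by blast
  then have "Dfoot m s K \<le> card {a \<in> \<Delta>. leading_on Z a}"
    unfolding Dfoot_def using finite_Delta by (intro card_mono) auto
  also have "\<dots> = card P - card Z" using card_footprint(2)[of Z] by (simp add: Z_def)
  also have "\<dots> = card (Supp U)"
    using SP finite_points by (simp add: Z_def card_Diff_subset finite_subset double_diff card_mono)
  finally show ?thesis using that K by blast
qed

lemma Dperp_le_card_Supp:
  assumes U: "fsubspace U" "U \<subseteq> dualcode P (fspan (ev ` La))"
    "U \<inter> dualcode P (fspan (ev ` Lb)) = {0}"
    and La: "initial_segment La" and Lb: "initial_segment Lb" "La \<subseteq> Lb"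
  obtains K where "K \<subseteq> Lb - La" "card K = fdim U" "Dperp m s K \<le> card (Supp U)"
proof -
  define J where "J = Supp U"
  have UJ: "U \<subseteq> supported_on J" by (simp add: J_def Supp_subset_iff[symmetric])
  have UP: "U \<subseteq> words" using U(2) by (auto simp: dualcode_eq)
  then have JP: "J \<subseteq> P" by (simp add: J_def Supp_subset_iff)
  have "annihilated U La = U" using U(2) by (auto simp: annihilated_def dualcode_eq)
  moreover have "annihilated U Lb \<subseteq> {0}"
    using U(3) UP by (auto simp: annihilated_def dualcode_eq)
  ultimately have "fdim U \<le> card ((Lb - La) \<inter> {a. \<not> leading_on J a})"
    by (intro fdim_le_card_footprint[OF JP U(1) UJ La Lb])
  then obtain K where K: "K \<subseteq> (Lb - La) \<inter> {a. \<not> leading_on J a}" "card K = fdim U"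
    by (rule obtain_subset_with_card_n)
  have "K \<subseteq> \<Delta>" using K Lb by (auto simp: initial_segment_def)
  then have "{N \<in> \<Delta>. \<exists>M\<in>K. mdvd N M} \<subseteq> {a \<in> \<Delta>. \<not> leading_on J a}"
    using K leading_on_mdvd by blast
  then have "Dperp m s K \<le> card {a \<in> \<Delta>. \<not> leading_on J a}"
    unfolding Dperp_def using finite_Delta by (intro card_mono) auto
  also have "\<dots> = card (Supp U)" using card_footprint(1)[OF JP] by (simp add: J_def)
  finally show ?thesis using that K by blast
qed

theorem RGHW_evcode:
  assumes La: "initial_segment La" and Lb: "initial_segment Lb" "La \<subseteq> Lb"
    and v: "v \<le> card (Lb - La)"
  shows "RGHW v (evcode m S Lb) (evcode m S La) = Min {Dfoot m s K | K. K \<subseteq> Lb - La \<and> card K = v}"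
proof -
  let ?A = "{card (Supp U) | U. fsubspace U \<and> U \<subseteq> evcode m S Lb \<and> fdim U = v
                \<and> U \<inter> evcode m S La = {0}}"
  let ?B = "{Dfoot m s K | K. K \<subseteq> Lb - La \<and> card K = v}"
  have fin: "finite (Lb - La)" using finite_initial_segment[OF Lb(1)] by simp
  have "?A \<subseteq> {card (Supp U) | U. U \<subseteq> words}"
  proof
    fix x assume "x \<in> ?A"
    then obtain U where "x = card (Supp U)" "U \<subseteq> evcode m S Lb" by blast
    then show "x \<in> {card (Supp U) | U. U \<subseteq> words}"
      using span_ev_supported[of Lb] unfolding evcode_def by blast
  qed
  then have finA: "finite ?A" using finite_card_Supp_words finite_subset by blast
  have lower: "\<forall>x\<in>?A. \<exists>y\<in>?B. y \<le> x"
  proof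
    fix x assume "x \<in> ?A"
    then obtain U where U: "x = card (Supp U)" "fsubspace U" "U \<subseteq> evcode m S Lb" "fdim U = v"
      "U \<inter> evcode m S La = {0}" by blast
    obtain K where "K \<subseteq> Lb - La" "card K = fdim U" "Dfoot m s K \<le> card (Supp U)"
      by (rule Dfoot_le_card_Supp[OF U(2,3,5)[unfolded evcode_def] La Lb])
    then show "\<exists>y\<in>?B. y \<le> x" using U(1,4) by blast
  qed
  have upper: "\<forall>y\<in>?B. \<exists>x\<in>?A. x \<le> y"
  proof
    fix y assume "y \<in> ?B"
    then obtain K where K: "y = Dfoot m s K" "K \<subseteq> Lb - La" "card K = v" by blast
    then have "K \<subseteq> Lb" "K \<inter> La = {}" by auto
    then obtain U where U: "fsubspace U" "U \<subseteq> fspan (ev ` Lb)" "fdim U = card K"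
      "U \<inter> fspan (ev ` La) = {0}" "card (Supp U) \<le> Dfoot m s K"
      by (rule exists_primal_subspace[OF _ _ La Lb(1)])
    then have "card (Supp U) \<in> ?A" using K(3) by (intro CollectI exI[of _ U]) (simp add: evcode_def)
    then show "\<exists>x\<in>?A. x \<le> y" using U(5) K(1) by blast
  qed
  show ?thesis unfolding RGHW_def
    by (rule Min_eq_if_mutually_bounded[OF finA finite_values_on_subsets[OF fin]
          values_on_subsets_nonempty[OF fin v] lower upper])
qed

theorem RGHW_dualcode_ge:
  assumes La: "initial_segment La" and Lb: "initial_segment Lb" "La \<subseteq> Lb"
    and v: "v \<le> card (Lb - La)"
  shows "Min {Dperp m s K | K. K \<subseteq> Lb - La \<and> card K = v}
    \<le> RGHW v (dualcode P (evcode m S La)) (dualcode P (evcode m S Lb))"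
proof -
  let ?A = "{card (Supp U) | U. fsubspace U \<and> U \<subseteq> dualcode P (evcode m S La) \<and> fdim U = v
                \<and> U \<inter> dualcode P (evcode m S Lb) = {0}}"
  let ?B = "{Dperp m s K | K. K \<subseteq> Lb - La \<and> card K = v}"
  have fin: "finite (Lb - La)" using finite_initial_segment[OF Lb(1)] by simp
  have "?A \<subseteq> {card (Supp U) | U. U \<subseteq> words}"
  proof
    fix x assume "x \<in> ?A"
    then obtain U where "x = card (Supp U)" "U \<subseteq> dualcode P (evcode m S La)" by blast
    then show "x \<in> {card (Supp U) | U. U \<subseteq> words}" unfolding dualcode_eq by blast
  qed
  then have finA: "finite ?A" using finite_card_Supp_words finite_subset by blast
  obtain K where K: "K \<subseteq> Lb - La" "card K = v" using obtain_subset_with_card_n[OF v] by metis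
  then have "K \<subseteq> Lb" "K \<inter> La = {}" by auto
  then obtain U where "fsubspace U" "U \<subseteq> dualcode P (fspan (ev ` La))" "fdim U = card K"
    "U \<inter> dualcode P (fspan (ev ` Lb)) = {0}"
    by (rule exists_dual_subspace[OF _ _ La Lb(1)])
  then have "card (Supp U) \<in> ?A" using K(2) by (intro CollectI exI[of _ U]) (simp add: evcode_def)
  then have neA: "?A \<noteq> {}" by blast
  have lower: "\<forall>x\<in>?A. \<exists>y\<in>?B. y \<le> x"
  proof
    fix x assume "x \<in> ?A"
    then obtain U where U: "x = card (Supp U)" "fsubspace U" "U \<subseteq> dualcode P (evcode m S La)"
      "fdim U = v" "U \<inter> dualcode P (evcode m S Lb) = {0}" by blast
    obtain K where "K \<subseteq> Lb - La" "card K = fdim U" "Dperp m s K \<le> card (Supp U)"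
      by (rule Dperp_le_card_Supp[OF U(2,3,5)[unfolded evcode_def] La Lb])
    then show "\<exists>y\<in>?B. y \<le> x" using U(1,4) by blast
  qed
  show ?thesis unfolding RGHW_def
    by (rule Min_le_if_bounded[OF finA neA finite_values_on_subsets[OF fin] lower])
qed

end

subsection \<open>Two monomials differing by a transposition of the first two exponents\<close>

lemma shift_prod_sub_le:
  fixes a b s w :: nat
  assumes "a \<le> b" "b < s" "w \<le> b - a"
  shows "(s - a) * (s - b) \<le> (s - (b - w)) * (s - (a + w))"
proof -
  define k where "k = b - a - w"
  define r where "r = s - b - 1"
  have k: "b = a + w + k" and r: "s = b + 1 + r" using assms by (simp_all add: k_def r_def)
  have "(s - (b - w)) * (s - (a + w)) = (w + k + r + 1) * (r + 1) + w * k"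
    using k r by (simp add: algebra_simps)
  also have "(w + k + r + 1) * (r + 1) = (s - a) * (s - b)" using k r by simp
  finally show ?thesis by simp
qed

lemma shift_prod_succ_le:
  fixes a b w :: nat
  assumes "a \<le> b" "w \<le> b - a"
  shows "(a + 1) * (b + 1) \<le> (b - w + 1) * (a + w + 1)"
proof -
  define k where "k = b - a - w"
  have k: "b = a + w + k" using assms by (simp add: k_def)
  have "(b - w + 1) * (a + w + 1) = (a + 1) * (a + w + k + 1) + w * k"
    using k by (simp add: algebra_simps)
  also have "(a + 1) * (a + w + k + 1) = (a + 1) * (b + 1)" using k by simp
  finally show ?thesis by simp
qed

locale swap_setting = grid +
  fixes i :: "nat \<Rightarrow> nat"
  assumes m2: "2 \<le> m" and i_Delta: "i \<in> Delta m s" and i12: "i 1 \<le> i 2"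
begin

definition "tau w = i(1 := i 2 - w, 2 := i 1 + w)"
definition "L1 = {N \<in> \<Delta>. deglex_le m N i}"
definition "L2 = {N \<in> \<Delta>. deglex_less m N (tau 0)}"
definition "T = tau ` {0..i 2 - i 1}"

lemma tau_last: "tau (i 2 - i 1) = i"
  using i12 by (auto simp: tau_def fun_eq_iff)

lemma sum_split_first_two: "(\<Sum>t=1..m. f t) = f 1 + f 2 + (\<Sum>t=3..m. f t)"
proof -
  have "{1..m} = insert 1 (insert 2 {3..m})" using m2 by auto
  then show ?thesis by (simp add: add.assoc)
qed

lemma prod_split_first_two: "(\<Prod>t\<in>{1..m}. f t) = f 1 * f 2 * (\<Prod>t\<in>{3..m}. f t)"
proof -
  have "{1..m} = insert 1 (insert 2 {3..m})" using m2 by auto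
  then show ?thesis by (simp add: mult.assoc)
qed

lemma i2_less: "i 2 < s"
  using i_Delta m2 by (auto simp: Delta_def)

lemma tau_Delta: "w \<le> i 2 - i 1 \<Longrightarrow> tau w \<in> \<Delta>"
  using i_Delta i12 i2_less by (auto simp: Delta_def tau_def)

lemma degree_tau: "w \<le> i 2 - i 1 \<Longrightarrow> (\<Sum>t=1..m. tau w t) = (\<Sum>t=1..m. i t)"
proof -
  assume "w \<le> i 2 - i 1"
  moreover have "(\<Sum>t=3..m. tau w t) = (\<Sum>t=3..m. i t)" by (intro sum.cong) (auto simp: tau_def)
  ultimately show ?thesis using i12
    unfolding sum_split_first_two[of "tau w"] sum_split_first_two[of i] by (simp add: tau_def)
qed

lemma prod_tau:
  "(\<Prod>t\<in>{1..m}. g (tau w t)) = g (i 2 - w) * g (i 1 + w) * (\<Prod>t\<in>{3..m}. g (i t))"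
proof -
  have "(\<Prod>t\<in>{3..m}. g (tau w t)) = (\<Prod>t\<in>{3..m}. g (i t))" by (intro prod.cong) (auto simp: tau_def)
  then show ?thesis unfolding prod_split_first_two[of "\<lambda>t. g (tau w t)"] by (simp add: tau_def)
qed

lemma tau_deglex_less: "w < w' \<Longrightarrow> w' \<le> i 2 - i 1 \<Longrightarrow> deglex_less m (tau w) (tau w')"
proof -
  assume ww: "w < w'" "w' \<le> i 2 - i 1"
  have "\<exists>t\<in>{1..m}. tau w t < tau w' t \<and> (\<forall>u\<in>{t<..m}. tau w u = tau w' u)"
    using ww m2 by (intro bexI[of _ 2]) (auto simp: tau_def)
  then show ?thesis using degree_tau ww by (simp add: deglex_less_def)
qed

lemma tau_deglex_le_i: "w \<le> i 2 - i 1 \<Longrightarrow> deglex_le m (tau w) i"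
  using tau_deglex_less[of w "i 2 - i 1"] tau_last by (cases "w = i 2 - i 1") (auto simp: deglex_le_def)

lemma card_T: "card T = i 2 - i 1 + 1"
proof -
  have "inj_on tau {0..i 2 - i 1}"
  proof
    fix w w' assume "tau w = tau w'"
    then have "tau w 2 = tau w' 2" by simp
    then show "w = w'" by (simp add: tau_def)
  qed
  then show ?thesis by (simp add: T_def card_image)
qed

lemma initial_segment_L1: "initial_segment L1"
  unfolding initial_segment_def L1_def deglex_le_def using deglex_less_trans by blast

lemma initial_segment_L2: "initial_segment L2"
  unfolding initial_segment_def L2_def using deglex_less_trans by blast

lemma L2_subset_L1: "L2 \<subseteq> L1"
  using tau_deglex_le_i[of 0] by (auto simp: L1_def L2_def deglex_le_def intro: deglex_less_trans)

lemma T_subset_L1: "T \<subseteq> L1"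
  using tau_deglex_le_i tau_Delta by (auto simp: T_def L1_def)

lemma T_disjoint_L2: "T \<inter> L2 = {}"
proof -
  have "\<not> deglex_less m (tau w) (tau 0)" if "w \<le> i 2 - i 1" for w
    using that tau_deglex_less[of 0 w] deglex_less_irrefl deglex_less_trans
    by (cases "w = 0") blast+
  then show ?thesis by (auto simp: T_def L2_def)
qed

lemma degree_between:
  assumes "deglex_le m (tau 0) N" "deglex_le m N i"
  shows "(\<Sum>t=1..m. N t) = (\<Sum>t=1..m. i t)"
  using degree_le_if_deglex_less[of m N i] degree_le_if_deglex_less[of m "tau 0" N] assms
    degree_tau[of 0] by (auto simp: deglex_le_def)

text \<open>A monomial between \<open>tau 0\<close> and \<open>i\<close> has their common degree, so at its last difference
  from \<open>i\<close> it lies below \<open>i\<close> and not below \<open>tau 0\<close>; as \<open>tau 0\<close> and \<open>i\<close> agree after the second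
  variable, that difference can only occur in the second variable.\<close>

lemma between_last_difference:
  assumes N: "deglex_le m (tau 0) N" "deglex_le m N i"
    and u: "u \<in> {2..m}" "N u \<noteq> i u" "\<forall>v\<in>{u<..m}. N v = i v"
  shows "tau 0 u \<le> N u \<and> N u < i u"
proof -
  have deg: "(\<Sum>t=1..m. N t) = (\<Sum>t=1..m. i t)" by (rule degree_between[OF N])
  have deg0: "(\<Sum>t=1..m. tau 0 t) = (\<Sum>t=1..m. i t)" using degree_tau[of 0] by simp
  have above: "\<forall>v\<in>{u<..m}. tau 0 v = N v" using u by (auto simp: tau_def)
  have "N u < i u"
    using N(2) u deg by (intro deglex_less_rightmost_difference) (auto simp: deglex_le_def)
  moreover have "tau 0 u < N u" if "tau 0 u \<noteq> N u"
    using N(1) that above deg deg0 u(1)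
    by (intro deglex_less_rightmost_difference[of m "tau 0" N]) (auto simp: deglex_le_def)
  ultimately show ?thesis by linarith
qed

lemma between_in_T:
  assumes N: "N \<in> \<Delta>" "deglex_le m (tau 0) N" "deglex_le m N i"
  shows "N \<in> T"
proof -
  have agree: "\<forall>u\<in>{3..m}. N u = i u"
  proof (rule ccontr)
    assume "\<not> ?thesis"
    then obtain t where "t \<in> {3..m}" "N t \<noteq> i t" by blast
    then obtain u where u: "u \<in> {3..m}" "N u \<noteq> i u" "\<forall>v\<in>{u<..m}. N v = i v"
      by (rule last_difference)
    then have "tau 0 u \<le> N u \<and> N u < i u" using between_last_difference[OF N(2,3)] by auto
    moreover have "tau 0 u = i u" using u(1) by (simp add: tau_def)
    ultimately show False by linarith
  qed
  have N2: "i 1 \<le> N 2 \<and> N 2 \<le> i 2"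
  proof (cases "N 2 = i 2")
    case False
    then show ?thesis using between_last_difference[OF N(2,3), of 2] agree m2 by (force simp: tau_def)
  qed (use i12 in simp)
  moreover have "N 1 + N 2 = i 1 + i 2"
  proof -
    have "(\<Sum>t=3..m. N t) = (\<Sum>t=3..m. i t)" using agree by (intro sum.cong) auto
    then show ?thesis
      using degree_between[OF N(2,3)] unfolding sum_split_first_two[of N] sum_split_first_two[of i]
      by simp
  qed
  ultimately have "N = tau (N 2 - i 1)"
    using agree N(1) i_Delta by (auto simp: tau_def Delta_def fun_eq_iff)
  moreover have "N 2 - i 1 \<le> i 2 - i 1" using N2 by linarith
  ultimately show ?thesis by (auto simp: T_def)
qed

lemma L1_diff_L2: "L1 - L2 = T"
proof -
  have "N \<in> T" if "N \<in> L1" "N \<notin> L2" for N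
  proof -
    have "N \<in> expvecs m" "tau 0 \<in> expvecs m"
      using that tau_Delta[of 0] Delta_subset_expvecs by (auto simp: L1_def)
    then have "deglex_le m (tau 0) N"
      using that deglex_less_total by (auto simp: deglex_le_def L1_def L2_def)
    then show ?thesis using that between_in_T by (auto simp: L1_def)
  qed
  then show ?thesis using T_subset_L1 T_disjoint_L2 by blast
qed

lemma Min_Dfoot_singletons: "Min ((\<lambda>a. Dfoot m s {a}) ` T) = (\<Prod>t\<in>{1..m}. s - i t)"
proof (rule Min_eqI)
  show "finite ((\<lambda>a. Dfoot m s {a}) ` T)" by (simp add: T_def)
  show "(\<Prod>t\<in>{1..m}. s - i t) \<in> (\<lambda>a. Dfoot m s {a}) ` T"
    using Dfoot_singleton[OF i_Delta] tau_last by (auto simp: T_def image_iff intro!: bexI[of _ "i 2 - i 1"])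
  fix y assume "y \<in> (\<lambda>a. Dfoot m s {a}) ` T"
  then obtain w where w: "w \<le> i 2 - i 1" "y = Dfoot m s {tau w}" by (auto simp: T_def)
  have "(s - i 1) * (s - i 2) \<le> (s - (i 2 - w)) * (s - (i 1 + w))"
    using shift_prod_sub_le[OF i12 i2_less] w(1) by simp
  then show "(\<Prod>t\<in>{1..m}. s - i t) \<le> y"
    unfolding w(2) Dfoot_singleton[OF tau_Delta[OF w(1)]] prod_tau[of "\<lambda>x. s - x"]
      prod_split_first_two[of "\<lambda>t. s - i t"]
    by (rule mult_right_mono) simp
qed

lemma Min_Dperp_singletons: "(\<Prod>t\<in>{1..m}. i t + 1) \<le> Min ((\<lambda>a. Dperp m s {a}) ` T)"
proof (rule Min.boundedI)
  show "finite ((\<lambda>a. Dperp m s {a}) ` T)" "(\<lambda>a. Dperp m s {a}) ` T \<noteq> {}" by (auto simp: T_def)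
  fix y assume "y \<in> (\<lambda>a. Dperp m s {a}) ` T"
  then obtain w where w: "w \<le> i 2 - i 1" "y = Dperp m s {tau w}" by (auto simp: T_def)
  have "(i 1 + 1) * (i 2 + 1) \<le> (i 2 - w + 1) * (i 1 + w + 1)"
    using shift_prod_succ_le[OF i12] w(1) by simp
  then show "(\<Prod>t\<in>{1..m}. i t + 1) \<le> y"
    unfolding w(2) Dperp_singleton[OF tau_Delta[OF w(1)]] prod_tau[of "\<lambda>x. x + 1"]
      prod_split_first_two[of "\<lambda>t. i t + 1"]
    by (rule mult_right_mono) simp
qed

lemma card_L1_diff_L2: "card (L1 - L2) = i 2 - i 1 + 1"
  using L1_diff_L2 card_T by simp

lemma fdim_evcode_L1: "fdim (evcode m S L1) = fdim (evcode m S L2) + (i 2 - i 1 + 1)"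
proof -
  have "L1 = L2 \<union> T" "L2 \<inter> T = {}" using L1_diff_L2 L2_subset_L1 T_disjoint_L2 by blast+
  moreover have "L1 \<subseteq> \<Delta>" "L2 \<subseteq> \<Delta>"
    using initial_segment_L1 initial_segment_L2 by (auto simp: initial_segment_def)
  moreover have "finite L2" "finite T" using initial_segment_L2 finite_initial_segment by (auto simp: T_def)
  ultimately show ?thesis using card_T by (simp add: fdim_evcode card_Un_disjoint)
qed

lemma RGHW_L1_L2:
  "v \<le> i 2 - i 1 + 1 \<Longrightarrow>
    RGHW v (evcode m S L1) (evcode m S L2) = Min {Dfoot m s K | K. K \<subseteq> T \<and> card K = v}"
  using RGHW_evcode[OF initial_segment_L2 initial_segment_L1 L2_subset_L1] card_L1_diff_L2
  by (simp add: L1_diff_L2)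

lemma RGHW_dual_L2_L1:
  "v \<le> i 2 - i 1 + 1 \<Longrightarrow>
    Min {Dperp m s K | K. K \<subseteq> T \<and> card K = v}
      \<le> RGHW v (dualcode P (evcode m S L2)) (dualcode P (evcode m S L1))"
  using RGHW_dualcode_ge[OF initial_segment_L2 initial_segment_L1 L2_subset_L1] card_L1_diff_L2
  by (simp add: L1_diff_L2)

lemma RGHW1_L1_L2: "RGHW 1 (evcode m S L1) (evcode m S L2) = (\<Prod>t\<in>{1..m}. s - i t)"
  using RGHW_L1_L2[of 1] Min_Dfoot_singletons unfolding values_on_singletons by simp

lemma RGHW1_dual_L2_L1:
  "(\<Prod>t\<in>{1..m}. i t + 1) \<le> RGHW 1 (dualcode P (evcode m S L2)) (dualcode P (evcode m S L1))"
  using RGHW_dual_L2_L1[of 1] Min_Dperp_singletons unfolding values_on_singletons by simp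

end

theorem mainTheorem7:
  fixes S :: "nat \<Rightarrow> 'a::{field,finite} set"
    and m s :: nat and i :: "nat \<Rightarrow> nat"
  assumes m2: "m \<ge> 2"
    and cardS: "\<forall>t\<in>{1..m}. card (S t) = s"
    and iD: "i \<in> Delta m s"
    and i12: "i 1 \<le> i 2"
  defines "L1 \<equiv> {N \<in> Delta m s. deglex_le m N i}"
    and "L2 \<equiv> {N \<in> Delta m s. deglex_less m N (i(1 := i 2, 2 := i 1))}"
    and "l \<equiv> i 2 - i 1 + 1"
    and "T \<equiv> {i(1 := i 2 - w, 2 := i 1 + w) | w. w \<in> {0..i 2 - i 1}}"
    and "P \<equiv> points m S"
  shows "card P = s ^ m
    \<and> evcode m S L2 \<subseteq> evcode m S L1
    \<and> fdim (evcode m S L1) = fdim (evcode m S L2) + l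
    \<and> RGHW 1 (evcode m S L1) (evcode m S L2) = (\<Prod>t\<in>{1..m}. s - i t)
    \<and> RGHW 1 (dualcode P (evcode m S L2)) (dualcode P (evcode m S L1)) \<ge> (\<Prod>t\<in>{1..m}. i t + 1)
    \<and> (\<forall>v\<in>{2..l}.
         RGHW v (evcode m S L1) (evcode m S L2) = Min {Dfoot m s K | K. K \<subseteq> T \<and> card K = v}
       \<and> RGHW v (dualcode P (evcode m S L2)) (dualcode P (evcode m S L1))
           \<ge> Min {Dperp m s K | K. K \<subseteq> T \<and> card K = v})"
proof -
  have "i 1 < s" using iD m2 by (auto simp: Delta_def)
  interpret sw: swap_setting m s S i
    using cardS \<open>i 1 < s\<close> m2 iD i12 by unfold_locales auto
  have defs: "L1 = sw.L1" "L2 = sw.L2" "T = sw.T"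
    unfolding L1_def L2_def T_def sw.L1_def sw.L2_def sw.T_def sw.tau_def by auto
  show ?thesis
    unfolding defs P_def l_def
    using sw.card_points sw.fdim_evcode_L1 sw.RGHW1_L1_L2 sw.RGHW1_dual_L2_L1
      sw.RGHW_L1_L2 sw.RGHW_dual_L2_L1 fv.span_mono[OF image_mono[OF sw.L2_subset_L1]]
    by (simp add: evcode_def)
qed

end
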